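(* Let $D\ge1$, $p>0$, integers $b\ge1$, $k\ge1$, $B\ge1$, and nonzero $u,v\in\mathbb{R}^D$. For $j=1,\dots,k$, let $(i^*_{u,j},t^*_{u,j})$, $(i^*_{v,j},t^*_{v,j})$ be GCWS outputs for $u$ and $v$ computed with the $j$-th set of shared random numbers, the $k$ sets being mutually independent, and let $(i^*_{u,j},t^*_{u,j})_b=g_j(i^*_{u,j},t^*_{u,j})$, $(i^*_{v,j},t^*_{v,j})_b=g_j(i^*_{v,j},t^*_{v,j})$, where $g_1,\dots,g_k$ are mutually independent random functions from $\{1,\dots,2D\}\times\mathbb{Z}$ to $\{0,\dots,2^b-1\}$ with independent uniform values, independent of all GCWS randomness. Let $P_b=P\{(i^*_{u,1},t^*_{u,1})_b=(i^*_{v,1},t^*_{v,1})_b\}$. Let $x,y\in\{0,1\}^{d}$, $d=2^b k$, be the concatenations of the one-hot encodings of $(i^*_{u,j},t^*_{u,j})_b$, $j=1..k$, and of $(i^*_{v,j},t^*_{v,j})_b$, $j=1..k$, respectively. Let $z,w\in\mathbb{R}^B$ be the count-sketch of $x$ and $y$ with $B$ bins (described in the context), the count-sketch randomness being independent of everything else. Let $$a=\sum_{j=1}^k 1\{(i^*_{u,j},t^*_{u,j})_b=(i^*_{v,j},t^*_{v,j})_b\}.$$ Then, conditioning on all the values $(i^*_{u,j},t^*_{u,j})_b,(i^*_{v,j},t^*_{v,j})_b$, $j=1,\dots,k$ (denoted GCWS), $$E\{\langle z,w\rangle\mid \text{GCWS}\}=a,\qquad \mathrm{Var}\{\langle z,w\rangle\mid\text{GCWS}\}=\frac1B\left[k^2+a^2-2a\right];$$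 $a$ has the binomial distribution $\mathrm{Bin}(k,P_b)$; unconditionally $$E\{\langle z,w\rangle\}=kP_b,\qquad \mathrm{Var}\{\langle z,w\rangle\}=\frac1B\left[k^2+k^2P_b^2-kP_b^2-kP_b\right]+kP_b(1-P_b);$$ and the estimator $\hat P_b=\langle z,w\rangle/k$ satisfies $$E(\hat P_b)=P_b,\qquad \mathrm{Var}(\hat P_b)=\frac{P_b(1-P_b)}{k}+\frac1B\left[1+P_b^2-P_b^2/k-P_b/k\right].$$
   Context: Sign-splitting transformation: for $u\in\mathbb{R}^D$, $\tilde u\in\mathbb{R}^{2D}$ with, for each $i$: if $u_i>0$ then $\tilde u_{2i-1}=u_i,\tilde u_{2i}=0$; if $u_i\le 0$ then $\tilde u_{2i-1}=0,\tilde u_{2i}=-u_i$. GCWS procedure (one set of random numbers): draw independently for $i=1,\dots,2D$: $r_i\sim\mathrm{Gamma}(2,1)$, $c_i\sim\mathrm{Gamma}(2,1)$, $\beta_i\sim\mathrm{Uniform}(0,1)$; for each $i$ with $\tilde u_i>0$ set $t_i=\lfloor p\log(\tilde u_i)/r_i+\beta_i\rfloor$, $a_i=\log(c_i)-r_i(t_i+1-\beta_i)$ (zero entries skipped); output $i^*=\arg\min_i a_i$, $t^*=t_{i^*}$. The same random numbers are used for $v$. One-hot concatenation: the value $h_j\in\{0,\dots,2^b-1\}$ is encoded as the vector in $\{0,1\}^{2^b}$ with a single 1 in position $h_j$; concatenating the $k$ encodings gives a vector of length $2^b k$ with exactly $k$ ones. Count-sketch with $B$ bins of $x\in\mathbb{R}^d$: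 draw $h(1),\dots,h(d)$ i.i.d. uniform on $\{1,\dots,B\}$ and, independently, $s_1,\dots,s_d$ i.i.d. uniform on $\{-1,+1\}$; set $z_m=\sum_{i=1}^d x_i s_i 1\{h(i)=m\}$ for $m=1,\dots,B$. The sketch $w$ of $y$ uses the same $h$ and $s$. $\langle z,w\rangle=\sum_{m=1}^B z_m w_m$. *)

theory Defs
  imports "HOL-Probability.Probability"
begin

text \<open>Vectors in R^D are represented as functions nat => real, of which only the
  coordinates 1..D are relevant.\<close>

text \<open>Sign-splitting: coordinate 2i-1 carries the positive part of u_i, 2i the negative part.\<close>
definition sign_split :: "(nat \<Rightarrow> real) \<Rightarrow> nat \<Rightarrow> real" where
  "sign_split u l =
     (if odd l then (if u ((l + 1) div 2) > 0 then u ((l + 1) div 2) else 0)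
      else (if u (l div 2) \<le> 0 then - u (l div 2) else 0))"

text \<open>GCWS with one set of random numbers r, c, beta (indexed 1..2D), applied to the
  already sign-split vector ut of length 2D.\<close>
definition gcws_t :: "real \<Rightarrow> (nat \<Rightarrow> real) \<Rightarrow> (nat \<Rightarrow> real) \<Rightarrow> (nat \<Rightarrow> real) \<Rightarrow> nat \<Rightarrow> int" where
  "gcws_t p ut r beta i = \<lfloor>p * ln (ut i) / r i + beta i\<rfloor>"

definition gcws_a :: "real \<Rightarrow> (nat \<Rightarrow> real) \<Rightarrow> (nat \<Rightarrow> real) \<Rightarrow> (nat \<Rightarrow> real) \<Rightarrow> (nat \<Rightarrow> real) \<Rightarrow> nat \<Rightarrow> real" where
  "gcws_a p ut r c beta i = ln (c i) - r i * (real_of_int (gcws_t p ut r beta i) + 1 - beta i)"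

definition gcws :: "nat \<Rightarrow> real \<Rightarrow> (nat \<Rightarrow> real) \<Rightarrow> (nat \<Rightarrow> real) \<Rightarrow> (nat \<Rightarrow> real) \<Rightarrow> (nat \<Rightarrow> real) \<Rightarrow> nat \<times> int" where
  "gcws D p ut r c beta =
     (let istar = arg_min_on (gcws_a p ut r c beta) {i \<in> {1..2*D}. ut i > 0}
      in (istar, gcws_t p ut r beta istar))"

text \<open>One-hot concatenation of k values hv 1, ..., hv k in {0..2^b-1}: position l (1-based,
  1 <= l <= 2^b k) lies in block j = (l-1) div 2^b + 1 with offset (l-1) mod 2^b.\<close>
definition onehot_concat :: "nat \<Rightarrow> (nat \<Rightarrow> real) \<Rightarrow> nat \<Rightarrow> real" where
  "onehot_concat b hv l =
     (if hv ((l - 1) div 2^b + 1) = real ((l - 1) mod 2^b) then 1 else 0)"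

definition count_sketch :: "nat \<Rightarrow> (nat \<Rightarrow> real) \<Rightarrow> (nat \<Rightarrow> real) \<Rightarrow> (nat \<Rightarrow> real) \<Rightarrow> nat \<Rightarrow> real" where
  "count_sketch d h s x m = (\<Sum>l\<in>{1..d}. x l * s l * (if h l = real m then 1 else 0))"

text \<open>Tags for the primitive random variables (all real-valued):
  R j i, C j i, Bt j i (GCWS random numbers of set j, coordinate i);
  G j i t (value of the random hash g_j at (i,t)); H l, S l (count-sketch bin / sign).\<close>
datatype rtag = R nat nat | C nat nat | Bt nat nat | G nat nat int | H nat | S nat

definition rtags :: "nat \<Rightarrow> nat \<Rightarrow> nat \<Rightarrow> rtag set" where
  "rtags D k d =
     {R j i | j i. j \<in> {1..k} \<and> i \<in> {1..2*D}} \<union>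
     {C j i | j i. j \<in> {1..k} \<and> i \<in> {1..2*D}} \<union>
     {Bt j i | j i. j \<in> {1..k} \<and> i \<in> {1..2*D}} \<union>
     {G j i t | j i t. j \<in> {1..k} \<and> i \<in> {1..2*D}} \<union>
     {H l | l. l \<in> {1..d}} \<union> {S l | l. l \<in> {1..d}}"

definition hashed_gcws :: "nat \<Rightarrow> real \<Rightarrow> (rtag \<Rightarrow> 'a \<Rightarrow> real) \<Rightarrow> (nat \<Rightarrow> real) \<Rightarrow> nat \<Rightarrow> 'a \<Rightarrow> real" where
  "hashed_gcws D p X u j \<omega> =
     (let (istar, tstar) = gcws D p (sign_split u) (\<lambda>i. X (R j i) \<omega>) (\<lambda>i. X (C j i) \<omega>)
                               (\<lambda>i. X (Bt j i) \<omega>)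
      in X (G j istar tstar) \<omega>)"

end

(* The random tags split into the GCWS tags (R, C, Bt, G) of the k blocks and the count-sketch tags
   (H, S), and the two groups are independent.  For fixed vectors x, y the inner product of their
   count sketches is the sum over l, l' of x_l y_l' s_l s_l' [h_l = h_l']; averaging over the signs
   and bins leaves only the pairings of indices, which gives the mean <x,y> and the second moment
   <x,y>^2 + (|x|^2 |y|^2 + <x,y>^2 - 2 sum_l x_l^2 y_l^2) / B.  For the one-hot encodings x, y of
   the hashed GCWS outputs, almost surely <x,y> = a, |x|^2 = |y|^2 = k and sum_l x_l^2 y_l^2 = a.
   Weighting these moments by a function of the GCWS tags gives the moments conditional on the
   hashed outputs.  The match indicators of the k blocks are independent and identically
   distributed, since each block applies the same measurable map to its own tags, so
   a ~ Bin(k, P_b), and averaging the conditional moments gives the unconditional ones. *)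

theory Submission
  imports Defs
begin

lemma sum_div_mod_blocks:
  fixes g :: "nat \<Rightarrow> nat \<Rightarrow> 'b::comm_monoid_add"
  assumes "N > 0"
  shows "(\<Sum>l\<in>{1..N * k}. g ((l - 1) div N + 1) ((l - 1) mod N)) = (\<Sum>j\<in>{1..k}. \<Sum>r<N. g j r)"
proof -
  have "(\<Sum>l\<in>{1..N * k}. g ((l - 1) div N + 1) ((l - 1) mod N)) = (\<Sum>l<k * N. g (l div N + 1) (l mod N))"
    unfolding One_nat_def sum.atLeast1_atMost_eq by (simp add: mult.commute)
  also have "\<dots> = (\<Sum>m<k. \<Sum>l\<in>{m * N..<m * N + N}. g (l div N + 1) (l mod N))"
    by (rule sum.nat_group[symmetric])
  also have "\<dots> = (\<Sum>m<k. \<Sum>r<N. g (m + 1) r)"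
  proof (rule sum.cong[OF refl])
    fix m
    have "(\<Sum>l\<in>{m * N..<m * N + N}. g (l div N + 1) (l mod N)) =
        (\<Sum>r\<in>{0..<N}. g ((r + m * N) div N + 1) ((r + m * N) mod N))"
      using sum.shift_bounds_nat_ivl[of "\<lambda>l. g (l div N + 1) (l mod N)" 0 "m * N" N]
      by (simp add: add.commute)
    also have "\<dots> = (\<Sum>r<N. g (m + 1) r)"
      using assms by (intro sum.cong) auto
    finally show "(\<Sum>l\<in>{m * N..<m * N + N}. g (l div N + 1) (l mod N)) = (\<Sum>r<N. g (m + 1) r)" .
  qed
  also have "\<dots> = (\<Sum>j\<in>{1..k}. \<Sum>r<N. g j r)"
    unfolding One_nat_def sum.atLeast1_atMost_eq by simp
  finally show ?thesis .
qed

lemma sum_off_diagonal: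
  fixes f :: "'i \<Rightarrow> 'i \<Rightarrow> 'b::ab_group_add"
  assumes "finite L"
  shows "(\<Sum>l\<in>L. \<Sum>l'\<in>L. if l = l' then 0 else f l l') = (\<Sum>l\<in>L. \<Sum>l'\<in>L. f l l') - (\<Sum>l\<in>L. f l l)"
proof -
  have "(\<Sum>l'\<in>L. if l = l' then 0 else f l l') = (\<Sum>l'\<in>L. f l l' - (if l = l' then f l l' else 0))" for l
    by (intro sum.cong) auto
  then show ?thesis
    using assms by (simp add: sum_subtractf)
qed

lemma abs_mult_le_mult:
  fixes a b :: real
  shows "\<bar>a\<bar> \<le> c \<Longrightarrow> \<bar>b\<bar> \<le> c' \<Longrightarrow> \<bar>a * b\<bar> \<le> c * c'"
  by (simp add: abs_mult mult_mono')

lemma square_double_sum: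
  fixes a :: "'i \<Rightarrow> 'i \<Rightarrow> 'b::comm_semiring_1"
  shows "(\<Sum>l\<in>L. \<Sum>l'\<in>L. a l l')\<^sup>2 = (\<Sum>l1\<in>L. \<Sum>l2\<in>L. \<Sum>l3\<in>L. \<Sum>l4\<in>L. a l1 l2 * a l3 l4)"
  unfolding power2_eq_square sum_product by (rule sum.cong[OF refl], rule sum.swap)

section \<open>Independent random variables\<close>

context prob_space
begin

lemma prob_in_finite_eq_sum:
  fixes Y :: "'a \<Rightarrow> real"
  assumes Y: "random_variable borel Y" and A: "finite A"
  shows "prob {\<omega>\<in>space M. Y \<omega> \<in> A} = (\<Sum>a\<in>A. prob {\<omega>\<in>space M. Y \<omega> = a})"
proof -
  interpret Y: finite_measure "distr M borel Y"
    by (rule finite_measure_distr[OF Y])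
  have distr_eq: "prob {\<omega>\<in>space M. Y \<omega> \<in> B} = measure (distr M borel Y) B" if "finite B" for B
  proof -
    have "{\<omega>\<in>space M. Y \<omega> \<in> B} = Y -` B \<inter> space M" by auto
    then show ?thesis
      using that by (simp add: measure_distr[OF Y] borel_closed finite_imp_closed)
  qed
  have "prob {\<omega>\<in>space M. Y \<omega> \<in> A} = (\<Sum>a\<in>A. measure (distr M borel Y) {a})"
    unfolding distr_eq[OF A] using A by (rule Y.finite_measure_eq_sum_singleton) simp
  also have "\<dots> = (\<Sum>a\<in>A. prob {\<omega>\<in>space M. Y \<omega> = a})"
    using distr_eq[of "{_}"] by simp
  finally show ?thesis .
qed

lemma AE_in_finite:
  fixes Y :: "'a \<Rightarrow> real"
  assumes "random_variable borel Y" "finite A" "(\<Sum>a\<in>A. prob {\<omega>\<in>space M. Y \<omega> = a}) = 1"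
  shows "AE \<omega> in M. Y \<omega> \<in> A"
proof -
  have "prob {\<omega>\<in>space M. Y \<omega> \<in> A} = 1"
    using assms by (simp add: prob_in_finite_eq_sum)
  then show ?thesis
    by (rule AE_prob_1[THEN AE_mp]) simp
qed

lemma distr_eq_if_finite_support:
  fixes Y Y' :: "'a \<Rightarrow> real"
  assumes Y: "random_variable borel Y" and Y': "random_variable borel Y'" and F: "finite F"
    and AE_Y: "AE \<omega> in M. Y \<omega> \<in> F" and AE_Y': "AE \<omega> in M. Y' \<omega> \<in> F"
    and eq: "\<And>a. a \<in> F \<Longrightarrow> prob {\<omega>\<in>space M. Y \<omega> = a} = prob {\<omega>\<in>space M. Y' \<omega> = a}"
  shows "distr M borel Y = distr M borel Y'"
proof -
  have F_borel: "F \<in> sets borel"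
    using F by (intro borel_closed finite_imp_closed)
  have prob_vimage: "prob (Z -` A \<inter> space M) = (\<Sum>a\<in>A \<inter> F. prob {\<omega>\<in>space M. Z \<omega> = a})"
    if Z: "random_variable borel Z" and AE_Z: "AE \<omega> in M. Z \<omega> \<in> F" and A: "A \<in> sets borel" for Z A
  proof -
    have "Z -` (A \<inter> F) \<inter> space M \<in> events"
      using Z A F_borel by (intro measurable_sets) auto
    moreover have "Z -` (A \<inter> F) \<inter> space M = {\<omega>\<in>space M. Z \<omega> \<in> A \<inter> F}"
      by auto
    ultimately have "prob (Z -` A \<inter> space M) = prob {\<omega>\<in>space M. Z \<omega> \<in> A \<inter> F}"
      using AE_Z measurable_sets[OF Z A] by (intro measure_eq_AE) auto
    also have "\<dots> = (\<Sum>a\<in>A \<inter> F. prob {\<omega>\<in>space M. Z \<omega> = a})"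
      using Z F by (intro prob_in_finite_eq_sum) auto
    finally show ?thesis .
  qed
  show ?thesis
  proof (rule measure_eqI)
    fix A assume "A \<in> sets (distr M borel Y)"
    then have A: "A \<in> sets borel" by simp
    have "prob (Y -` A \<inter> space M) = prob (Y' -` A \<inter> space M)"
      unfolding prob_vimage[OF Y AE_Y A] prob_vimage[OF Y' AE_Y' A] using eq by simp
    then show "emeasure (distr M borel Y) A = emeasure (distr M borel Y') A"
      using A by (simp add: emeasure_distr Y Y' emeasure_eq_measure)
  qed simp
qed

lemma expectation_indicator_eq:
  "expectation (\<lambda>\<omega>. if Y \<omega> = c then 1 else 0) = prob {\<omega>\<in>space M. Y \<omega> = c}"
proof -
  have "expectation (\<lambda>\<omega>. if Y \<omega> = c then 1 else 0) = expectation (indicator {\<omega>\<in>space M. Y \<omega> = c})"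
    by (intro Bochner_Integration.integral_cong) auto
  also have "\<dots> = prob ({\<omega>\<in>space M. Y \<omega> = c} \<inter> space M)"
    by simp
  also have "{\<omega>\<in>space M. Y \<omega> = c} \<inter> space M = {\<omega>\<in>space M. Y \<omega> = c}"
    by auto
  finally show ?thesis .
qed

lemma integral_uniform_measure:
  fixes f :: "'a \<Rightarrow> real"
  assumes E: "E \<in> events" "prob E > 0" and f: "f \<in> borel_measurable M"
  shows "integral\<^sup>L (uniform_measure M E) f = expectation (\<lambda>\<omega>. indicator E \<omega> * f \<omega>) / prob E"
proof -
  have "uniform_measure M E = density M (\<lambda>\<omega>. ennreal (indicator E \<omega> / prob E))"
    unfolding uniform_measure_def
  proof (intro arg_cong[where f = "density M"] ext)
    fix \<omega>
    show "indicator E \<omega> / emeasure M E = ennreal (indicator E \<omega> / prob E)"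
      using E divide_ennreal[of 1 "prob E"] by (cases "\<omega> \<in> E") (auto simp: emeasure_eq_measure)
  qed
  also have "integral\<^sup>L \<dots> f = expectation (\<lambda>\<omega>. (indicator E \<omega> / prob E) *\<^sub>R f \<omega>)"
    using E f by (intro integral_density) auto
  also have "\<dots> = expectation (\<lambda>\<omega>. indicator E \<omega> * f \<omega>) / prob E"
    by simp
  finally show ?thesis .
qed

lemma variance_divide:
  fixes Z :: "'a \<Rightarrow> real"
  shows "variance (\<lambda>\<omega>. Z \<omega> / c) = variance Z / c\<^sup>2"
proof -
  have "(\<lambda>\<omega>. (Z \<omega> / c - expectation (\<lambda>\<omega>. Z \<omega> / c))\<^sup>2) = (\<lambda>\<omega>. (Z \<omega> - expectation Z)\<^sup>2 / c\<^sup>2)"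
    by (simp add: fun_eq_iff diff_divide_distrib[symmetric] power_divide)
  then show ?thesis
    by simp
qed

lemma integral_mult_indep_restrict:
  fixes X :: "'i \<Rightarrow> 'a \<Rightarrow> real" and f g :: "('i \<Rightarrow> real) \<Rightarrow> real"
  assumes indep: "indep_vars (\<lambda>_. borel) X I" and A: "A \<subseteq> I" "A' \<subseteq> I" "A \<inter> A' = {}"
    and f: "f \<in> borel_measurable (PiM A (\<lambda>_. borel))" "integrable M (\<lambda>\<omega>. f (restrict (\<lambda>i. X i \<omega>) A))"
    and g: "g \<in> borel_measurable (PiM A' (\<lambda>_. borel))" "integrable M (\<lambda>\<omega>. g (restrict (\<lambda>i. X i \<omega>) A'))"
  shows "expectation (\<lambda>\<omega>. f (restrict (\<lambda>i. X i \<omega>) A) * g (restrict (\<lambda>i. X i \<omega>) A')) =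
         expectation (\<lambda>\<omega>. f (restrict (\<lambda>i. X i \<omega>) A)) * expectation (\<lambda>\<omega>. g (restrict (\<lambda>i. X i \<omega>) A'))"
    and "integrable M (\<lambda>\<omega>. f (restrict (\<lambda>i. X i \<omega>) A) * g (restrict (\<lambda>i. X i \<omega>) A'))"
proof -
  have "indep_var (PiM A (\<lambda>_. borel)) (\<lambda>\<omega>. restrict (\<lambda>i. X i \<omega>) A)
                  (PiM A' (\<lambda>_. borel)) (\<lambda>\<omega>. restrict (\<lambda>i. X i \<omega>) A')"
    using indep A by (intro indep_var_restrict) auto
  from indep_var_compose[OF this f(1) g(1)]
  have "indep_var borel (\<lambda>\<omega>. f (restrict (\<lambda>i. X i \<omega>) A)) borel (\<lambda>\<omega>. g (restrict (\<lambda>i. X i \<omega>) A'))"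
    by (simp add: comp_def)
  from indep_var_lebesgue_integral[OF this f(2) g(2)] indep_var_integrable[OF this f(2) g(2)]
  show "expectation (\<lambda>\<omega>. f (restrict (\<lambda>i. X i \<omega>) A) * g (restrict (\<lambda>i. X i \<omega>) A')) =
         expectation (\<lambda>\<omega>. f (restrict (\<lambda>i. X i \<omega>) A)) * expectation (\<lambda>\<omega>. g (restrict (\<lambda>i. X i \<omega>) A'))"
    and "integrable M (\<lambda>\<omega>. f (restrict (\<lambda>i. X i \<omega>) A) * g (restrict (\<lambda>i. X i \<omega>) A'))" .
qed

lemma integrable_bounded_restrict:
  fixes X :: "'i \<Rightarrow> 'a \<Rightarrow> real" and f :: "('i \<Rightarrow> real) \<Rightarrow> real"
  assumes indep: "indep_vars (\<lambda>_. borel) X I" and A: "A \<subseteq> I"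
    and f: "f \<in> borel_measurable (PiM A (\<lambda>_. borel))" "\<And>w. \<bar>f w\<bar> \<le> c"
  shows "integrable M (\<lambda>\<omega>. f (restrict (\<lambda>i. X i \<omega>) A))"
proof (rule integrable_const_bound[where B = c])
  have "(\<lambda>\<omega>. restrict (\<lambda>i. X i \<omega>) A) \<in> measurable M (PiM A (\<lambda>_. borel))"
    using indep A by (intro measurable_restrict) (auto simp: indep_vars_def)
  from measurable_compose[OF this f(1)]
  show "(\<lambda>\<omega>. f (restrict (\<lambda>i. X i \<omega>) A)) \<in> borel_measurable M"
    by (simp add: comp_def)
qed (use f(2) in auto)

lemma integral_sum_indep_restrict:
  fixes X :: "'i \<Rightarrow> 'a \<Rightarrow> real" and f g :: "'j \<Rightarrow> ('i \<Rightarrow> real) \<Rightarrow> real"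
  assumes indep: "indep_vars (\<lambda>_. borel) X I" and A: "A \<subseteq> I" "A' \<subseteq> I" "A \<inter> A' = {}"
    and J: "finite J"
    and f: "\<And>j. j \<in> J \<Longrightarrow> f j \<in> borel_measurable (PiM A (\<lambda>_. borel))" "\<And>j w. j \<in> J \<Longrightarrow> \<bar>f j w\<bar> \<le> c"
    and g: "\<And>j. j \<in> J \<Longrightarrow> g j \<in> borel_measurable (PiM A' (\<lambda>_. borel))" "\<And>j w. j \<in> J \<Longrightarrow> \<bar>g j w\<bar> \<le> c'"
  shows "expectation (\<lambda>\<omega>. \<Sum>j\<in>J. f j (restrict (\<lambda>i. X i \<omega>) A) * g j (restrict (\<lambda>i. X i \<omega>) A')) =
         expectation (\<lambda>\<omega>. \<Sum>j\<in>J. f j (restrict (\<lambda>i. X i \<omega>) A) * expectation (\<lambda>\<omega>'. g j (restrict (\<lambda>i. X i \<omega>') A')))"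
proof -
  have int_f: "integrable M (\<lambda>\<omega>. f j (restrict (\<lambda>i. X i \<omega>) A))" if "j \<in> J" for j
    using that by (intro integrable_bounded_restrict[OF indep A(1) f(1)]) (use f(2) in auto)
  have int_g: "integrable M (\<lambda>\<omega>. g j (restrict (\<lambda>i. X i \<omega>) A'))" if "j \<in> J" for j
    using that by (intro integrable_bounded_restrict[OF indep A(2) g(1)]) (use g(2) in auto)
  note indep_product = integral_mult_indep_restrict[OF indep A f(1) int_f g(1) int_g]
  have "expectation (\<lambda>\<omega>. \<Sum>j\<in>J. f j (restrict (\<lambda>i. X i \<omega>) A) * g j (restrict (\<lambda>i. X i \<omega>) A')) =
      (\<Sum>j\<in>J. expectation (\<lambda>\<omega>. f j (restrict (\<lambda>i. X i \<omega>) A) * g j (restrict (\<lambda>i. X i \<omega>) A')))"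
    using indep_product(2) by (rule Bochner_Integration.integral_sum)
  also have "\<dots> = (\<Sum>j\<in>J. expectation (\<lambda>\<omega>. f j (restrict (\<lambda>i. X i \<omega>) A) *
                        expectation (\<lambda>\<omega>'. g j (restrict (\<lambda>i. X i \<omega>') A'))))"
    using indep_product(1) by (intro sum.cong refl) (simp only: integral_mult_left_zero)
  also have "\<dots> = expectation (\<lambda>\<omega>. \<Sum>j\<in>J. f j (restrict (\<lambda>i. X i \<omega>) A) *
                        expectation (\<lambda>\<omega>'. g j (restrict (\<lambda>i. X i \<omega>') A')))"
    using int_f by (intro Bochner_Integration.integral_sum[symmetric] integrable_mult_left)
  finally show ?thesis .
qed

lemma distr_reindex_indep_vars:
  fixes X :: "'i \<Rightarrow> 'a \<Rightarrow> real"
  assumes indep: "indep_vars (\<lambda>_. borel) X I"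
    and f: "inj_on f K" "f ` K \<subseteq> I" and K: "K \<noteq> {}"
  shows "distr M (PiM K (\<lambda>_. borel)) (\<lambda>\<omega>. \<lambda>t\<in>K. X (f t) \<omega>) = PiM K (\<lambda>t. distr M borel (X (f t)))"
proof -
  let ?J = "f ` K"
  have rv: "random_variable borel (X i)" if "i \<in> I" for i
    using indep that by (auto simp: indep_vars_def)
  have "indep_vars (\<lambda>_. borel) X ?J"
    using indep f(2) by (rule indep_vars_subset)
  then have distr_J: "distr M (PiM ?J (\<lambda>_. borel)) (\<lambda>\<omega>. \<lambda>i\<in>?J. X i \<omega>) = PiM ?J (\<lambda>i. distr M borel (X i))"
    using indep_vars_iff_distr_eq_PiM'[of ?J, where M' = "\<lambda>_. borel" and X = X] K f(2) rv by auto
  have reindex: "(\<lambda>\<omega>. \<lambda>t\<in>K. X (f t) \<omega>) = (\<lambda>w. \<lambda>t\<in>K. w (f t)) \<circ> (\<lambda>\<omega>. \<lambda>i\<in>?J. X i \<omega>)"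
    by (auto simp: fun_eq_iff)
  have "(\<lambda>\<omega>. \<lambda>i\<in>?J. X i \<omega>) \<in> measurable M (PiM ?J (\<lambda>_. borel))"
    using f(2) rv by (intro measurable_restrict) auto
  moreover have "(\<lambda>w. \<lambda>t\<in>K. w (f t)) \<in> measurable (PiM ?J (\<lambda>_. borel)) (PiM K (\<lambda>_. borel :: real measure))"
    by (intro measurable_restrict measurable_component_singleton) auto
  ultimately have "distr M (PiM K (\<lambda>_. borel)) (\<lambda>\<omega>. \<lambda>t\<in>K. X (f t) \<omega>) =
      distr (PiM ?J (\<lambda>i. distr M borel (X i))) (PiM K (\<lambda>_. borel)) (\<lambda>w. \<lambda>t\<in>K. w (f t))"
    unfolding reindex distr_J[symmetric] by (simp add: distr_distr)
  also have "\<dots> = distr (PiM ?J (\<lambda>i. distr M borel (X i))) (PiM K (\<lambda>t. distr M borel (X (f t)))) (\<lambda>w. \<lambda>t\<in>K. w (f t))"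
    by (intro distr_cong refl sets_PiM_cong) auto
  also have "\<dots> = PiM K (\<lambda>t. distr M borel (X (f t)))"
    using f rv by (intro distr_PiM_reindex prob_space_distr) auto
  finally show ?thesis .
qed

lemma indep_vars_vimage_events:
  fixes Y :: "'i \<Rightarrow> 'a \<Rightarrow> bool"
  assumes "indep_vars (\<lambda>_. count_space UNIV) Y J" "j \<in> J"
  shows "Y j -` A \<inter> space M \<in> events"
  using assms by (auto simp: indep_vars_def intro: measurable_sets)

lemma prob_indep_events_pattern:
  fixes Y :: "'i \<Rightarrow> 'a \<Rightarrow> bool"
  assumes indep: "indep_vars (\<lambda>_. count_space UNIV) Y J" and J: "finite J" "J \<noteq> {}"
    and q: "\<And>j. j \<in> J \<Longrightarrow> prob {\<omega>\<in>space M. Y j \<omega>} = q" and T: "T \<subseteq> J"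
  shows "prob {\<omega>\<in>space M. \<forall>j\<in>J. Y j \<omega> = (j \<in> T)} = q ^ card T * (1 - q) ^ (card J - card T)"
proof -
  have prob_Y: "prob (Y j -` {j \<in> T} \<inter> space M) = (if j \<in> T then q else 1 - q)" if "j \<in> J" for j
  proof -
    have "Y j -` {True} \<inter> space M = {\<omega>\<in>space M. Y j \<omega>}"
      by auto
    then have "{\<omega>\<in>space M. Y j \<omega>} \<in> events"
      using indep_vars_vimage_events[OF indep that, of "{True}"] by simp
    moreover have "Y j -` {j \<in> T} \<inter> space M =
        (if j \<in> T then {\<omega>\<in>space M. Y j \<omega>} else space M - {\<omega>\<in>space M. Y j \<omega>})"
      by auto
    ultimately show ?thesis
      using q[OF that] by (simp add: prob_compl)
  qed
  have "{\<omega>\<in>space M. \<forall>j\<in>J. Y j \<omega> = (j \<in> T)} = (\<Inter>j\<in>J. Y j -` {j \<in> T} \<inter> space M)"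
    using J(2) by auto
  also have "prob \<dots> = (\<Prod>j\<in>J. if j \<in> T then q else 1 - q)"
    using J prob_Y by (subst indep_varsD[OF indep]) auto
  also have "\<dots> = q ^ card T * (1 - q) ^ card (J - T)"
    using T J by (simp add: prod.If_cases Int_absorb1 Diff_eq)
  finally show ?thesis
    using T J(1) by (simp add: card_Diff_subset[OF finite_subset[of T J]])
qed

lemma card_indep_events_binomial:
  fixes Y :: "'i \<Rightarrow> 'a \<Rightarrow> bool"
  assumes indep: "indep_vars (\<lambda>_. count_space UNIV) Y J" and J: "finite J" "J \<noteq> {}"
    and q: "\<And>j. j \<in> J \<Longrightarrow> prob {\<omega>\<in>space M. Y j \<omega>} = q"
  shows "prob {\<omega>\<in>space M. card {j\<in>J. Y j \<omega>} = n} = pmf (binomial_pmf (card J) q) n"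
proof -
  define pattern where "pattern T = {\<omega>\<in>space M. \<forall>j\<in>J. Y j \<omega> = (j \<in> T)}" for T
  let ?subsets = "{T. T \<subseteq> J \<and> card T = n}"
  have "{\<omega>\<in>space M. card {j\<in>J. Y j \<omega>} = n} = (\<Union>T\<in>?subsets. pattern T)"
  proof (intro set_eqI iffI)
    fix \<omega> assume "\<omega> \<in> {\<omega>\<in>space M. card {j\<in>J. Y j \<omega>} = n}"
    then show "\<omega> \<in> (\<Union>T\<in>?subsets. pattern T)"
      unfolding UN_iff pattern_def by (intro bexI[of _ "{j\<in>J. Y j \<omega>}"]) auto
  next
    fix \<omega> assume "\<omega> \<in> (\<Union>T\<in>?subsets. pattern T)"
    then obtain T where "card T = n" "\<omega> \<in> space M" "\<forall>j\<in>J. Y j \<omega> = (j \<in> T)" "T \<subseteq> J"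
      by (auto simp: pattern_def)
    moreover from this have "{j\<in>J. Y j \<omega>} = T"
      by auto
    ultimately show "\<omega> \<in> {\<omega>\<in>space M. card {j\<in>J. Y j \<omega>} = n}"
      by simp
  qed
  then have "prob {\<omega>\<in>space M. card {j\<in>J. Y j \<omega>} = n} = (\<Sum>T\<in>?subsets. prob (pattern T))"
  proof (simp only:, intro finite_measure_finite_Union)
    show "finite ?subsets"
      by (rule finite_subset[of _ "Pow J"]) (use J(1) in auto)
    have pattern_eq: "pattern T = (\<Inter>j\<in>J. Y j -` {j \<in> T} \<inter> space M)" for T
      using J(2) by (auto simp: pattern_def)
    show "pattern ` ?subsets \<subseteq> events"
      unfolding pattern_eq using J indep_vars_vimage_events[OF indep] by (intro image_subsetI sets.finite_INT) auto
    show "disjoint_family_on pattern ?subsets"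
      unfolding pattern_def disjoint_family_on_def by blast
  qed
  also have "\<dots> = real (card J choose n) * (q ^ n * (1 - q) ^ (card J - n))"
    using prob_indep_events_pattern[OF indep J q] n_subsets[OF J(1), of n] by (simp add: pattern_def)
  also have "q \<in> {0..1}"
    using J q by fastforce
  then have "real (card J choose n) * (q ^ n * (1 - q) ^ (card J - n)) = pmf (binomial_pmf (card J) q) n"
    by simp
  finally show ?thesis .
qed

lemma expectation_card_indep_events:
  fixes Y :: "'i \<Rightarrow> 'a \<Rightarrow> bool" and q :: real
  assumes indep: "indep_vars (\<lambda>_. count_space UNIV) Y J" and J: "finite J"
    and q: "\<And>j. j \<in> J \<Longrightarrow> prob {\<omega>\<in>space M. Y j \<omega>} = q"
  shows "expectation (\<lambda>\<omega>. real (card {j\<in>J. Y j \<omega>})) = card J * q"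
    and "expectation (\<lambda>\<omega>. (real (card {j\<in>J. Y j \<omega>}))\<^sup>2) = card J * q + (real (card J) ^ 2 - card J) * q ^ 2"
proof -
  define event where "event j = {\<omega>\<in>space M. Y j \<omega>}" for j
  have event_sets: "event j \<in> events" if "j \<in> J" for j
    using indep_vars_vimage_events[OF indep that, of "{True}"] by (simp add: event_def vimage_def Int_def conj_commute)
  have card_eq: "real (card {j\<in>J. Y j \<omega>}) = (\<Sum>j\<in>J. indicator (event j) \<omega>)" if "\<omega> \<in> space M" for \<omega>
    using J that by (simp add: event_def indicator_def sum.If_cases Int_def)
  have prob_pair: "prob (event j \<inter> event j') = (if j = j' then q else q\<^sup>2)" if "j \<in> J" "j' \<in> J" for j j'
  proof (cases "j = j'")
    case False
    have "prob (\<Inter>i\<in>{j, j'}. Y i -` {True} \<inter> space M) = (\<Prod>i\<in>{j, j'}. prob (Y i -` {True} \<inter> space M))"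
      using that by (intro indep_varsD[OF indep]) auto
    moreover have "Y i -` {True} \<inter> space M = event i" for i
      by (auto simp: event_def)
    ultimately show ?thesis
      using False q that by (simp add: event_def power2_eq_square)
  qed (use q that in \<open>simp add: event_def\<close>)
  have "expectation (\<lambda>\<omega>. real (card {j\<in>J. Y j \<omega>})) = expectation (\<lambda>\<omega>. \<Sum>j\<in>J. indicator (event j) \<omega>)"
    by (intro Bochner_Integration.integral_cong refl card_eq)
  also have "\<dots> = (\<Sum>j\<in>J. prob (event j))"
    using event_sets by (subst Bochner_Integration.integral_sum) (auto simp: emeasure_eq_measure)
  finally show "expectation (\<lambda>\<omega>. real (card {j\<in>J. Y j \<omega>})) = card J * q"
    using q by (simp add: event_def)
  have "expectation (\<lambda>\<omega>. (real (card {j\<in>J. Y j \<omega>}))\<^sup>2) =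
      expectation (\<lambda>\<omega>. \<Sum>j\<in>J. \<Sum>j'\<in>J. indicator (event j \<inter> event j') \<omega>)"
    by (intro Bochner_Integration.integral_cong refl)
       (simp add: card_eq power2_eq_square sum_product indicator_inter_arith)
  also have "\<dots> = (\<Sum>j\<in>J. \<Sum>j'\<in>J. prob (event j \<inter> event j'))"
    using event_sets by (simp add: Bochner_Integration.integral_sum emeasure_eq_measure sets.Int)
  also have "\<dots> = (\<Sum>j\<in>J. q + (real (card J) - 1) * q\<^sup>2)"
  proof (intro sum.cong refl)
    fix j assume "j \<in> J"
    then have "(\<Sum>j'\<in>J. prob (event j \<inter> event j')) = (\<Sum>j'\<in>J. q\<^sup>2 + (if j = j' then q - q\<^sup>2 else 0))"
      using prob_pair by (intro sum.cong) auto
    then show "(\<Sum>j'\<in>J. prob (event j \<inter> event j')) = q + (real (card J) - 1) * q\<^sup>2"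
      using \<open>j \<in> J\<close> J by (simp add: sum.distrib algebra_simps)
  qed
  finally show "expectation (\<lambda>\<omega>. (real (card {j\<in>J. Y j \<omega>}))\<^sup>2) = card J * q + (real (card J) ^ 2 - card J) * q ^ 2"
    by (simp add: power2_eq_square algebra_simps)
qed

lemma variance_eq_bounded:
  fixes f :: "'a \<Rightarrow> real"
  assumes "f \<in> borel_measurable M" "AE \<omega> in M. \<bar>f \<omega>\<bar> \<le> c"
  shows "variance f = expectation (\<lambda>\<omega>. (f \<omega>)\<^sup>2) - (expectation f)\<^sup>2"
proof (rule variance_eq)
  show "integrable M f"
    using assms by (intro integrable_const_bound[where B = c]) auto
  have "AE \<omega> in M. \<bar>(f \<omega>)\<^sup>2\<bar> \<le> c\<^sup>2"
    using assms(2)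
  proof eventually_elim
    case (elim \<omega>)
    then have "\<bar>f \<omega>\<bar>\<^sup>2 \<le> c\<^sup>2"
      by (intro power_mono) auto
    then show ?case
      by simp
  qed
  then show "integrable M (\<lambda>\<omega>. (f \<omega>)\<^sup>2)"
    using assms(1) by (intro integrable_const_bound[where B = "c\<^sup>2"]) auto
qed

end

lemma measurable_component_PiM [measurable]:
  "(\<lambda>w. w t) \<in> borel_measurable (PiM A (\<lambda>_. borel :: real measure))"
proof (cases "t \<in> A")
  case False
  have "(\<lambda>w. undefined :: real) \<in> borel_measurable (PiM A (\<lambda>_. borel))"
    by simp
  then show ?thesis
    by (rule measurable_cong[THEN iffD1, rotated]) (use False in \<open>auto simp: space_PiM PiE_def extensional_def\<close>)
qed measurable

section \<open>Count sketch\<close>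

(* The sign and bin tags are {-1, 1}- and {1..B}-valued only almost surely; sign_of and bin_of
   force these ranges, so that the identities for sketch_kernel below hold everywhere. *)
definition sign_of :: "real \<Rightarrow> real" where
  "sign_of x = (if x = 1 then 1 else -1)"

definition bin_of :: "nat \<Rightarrow> real \<Rightarrow> real" where
  "bin_of B x = (if x \<in> real ` {1..B} then x else 1)"

definition sketch_kernel :: "nat \<Rightarrow> nat \<Rightarrow> nat \<Rightarrow> (rtag \<Rightarrow> real) \<Rightarrow> real" where
  "sketch_kernel B l l' w =
     sign_of (w (S l)) * sign_of (w (S l')) * (if bin_of B (w (H l)) = bin_of B (w (H l')) then 1 else 0)"

(* The expectation of sketch_kernel B l1 l2 * sketch_kernel B l3 l4: a sign occurring only once
   averages the term out, so only the diagonal terms and the pairings {l3, l4} = {l1, l2} remain. *)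
definition kernel_moment :: "nat \<Rightarrow> nat \<Rightarrow> nat \<Rightarrow> nat \<Rightarrow> nat \<Rightarrow> real" where
  "kernel_moment B l1 l2 l3 l4 =
     (if l1 = l2 \<and> l3 = l4 then 1 else 0) + (if l1 \<noteq> l2 \<and> {l3, l4} = {l1, l2} then 1 / B else 0)"

lemma count_sketch_inner:
  assumes h: "\<And>l. l \<in> {1..d} \<Longrightarrow> h l \<in> real ` {1..B}"
  shows "(\<Sum>m\<in>{1..B}. count_sketch d h s x m * count_sketch d h s y m) =
         (\<Sum>l\<in>{1..d}. \<Sum>l'\<in>{1..d}. x l * y l' * (s l * s l' * (if h l = h l' then 1 else 0)))"
proof -
  have collisions: "(\<Sum>m\<in>{1..B}. (if h l = real m then 1 else 0) * (if h l' = real m then 1 else 0)) =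
      (if h l = h l' then 1 else (0::real))" if l: "l \<in> {1..d}" for l l'
  proof -
    obtain m0 where m0: "m0 \<in> {1..B}" "h l = real m0"
      using h[OF l] by auto
    then have "(\<Sum>m\<in>{1..B}. (if h l = real m then 1 else 0) * (if h l' = real m then 1 else 0)) =
        (\<Sum>m\<in>{1..B}. if m = m0 then (if h l' = h l then 1 else 0) else (0::real))"
      by (intro sum.cong) auto
    then show ?thesis
      using m0(1) by auto
  qed
  let ?term = "\<lambda>m l l'. x l * s l * (if h l = real m then 1 else 0) * (y l' * s l' * (if h l' = real m then 1 else 0))"
  have "(\<Sum>m\<in>{1..B}. count_sketch d h s x m * count_sketch d h s y m) =
      (\<Sum>m\<in>{1..B}. \<Sum>l\<in>{1..d}. \<Sum>l'\<in>{1..d}. ?term m l l')"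
    unfolding count_sketch_def by (simp only: sum_product)
  also have "\<dots> = (\<Sum>l\<in>{1..d}. \<Sum>l'\<in>{1..d}. \<Sum>m\<in>{1..B}. ?term m l l')"
    by (subst sum.swap) (rule sum.cong[OF refl], rule sum.swap)
  also have "\<dots> = (\<Sum>l\<in>{1..d}. \<Sum>l'\<in>{1..d}. x l * y l' * (s l * s l' *
      (\<Sum>m\<in>{1..B}. (if h l = real m then 1 else 0) * (if h l' = real m then 1 else 0))))"
    by (intro sum.cong refl) (simp add: sum_distrib_left algebra_simps)
  also have "\<dots> = (\<Sum>l\<in>{1..d}. \<Sum>l'\<in>{1..d}. x l * y l' * (s l * s l' * (if h l = h l' then 1 else 0)))"
    using collisions by simp
  finally show ?thesis .
qed

lemma sum_diagonal_kernel:
  fixes x y :: "'i \<Rightarrow> real"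
  assumes "finite L"
  shows "(\<Sum>l1\<in>L. \<Sum>l2\<in>L. \<Sum>l3\<in>L. \<Sum>l4\<in>L. x l1 * y l2 * x l3 * y l4 * (if l1 = l2 \<and> l3 = l4 then 1 else 0)) =
         (\<Sum>l\<in>L. x l * y l)\<^sup>2"
proof -
  have "(\<Sum>l1\<in>L. \<Sum>l2\<in>L. \<Sum>l3\<in>L. \<Sum>l4\<in>L. x l1 * y l2 * x l3 * y l4 * (if l1 = l2 \<and> l3 = l4 then 1 else 0)) =
      (\<Sum>l1\<in>L. \<Sum>l2\<in>L. \<Sum>l3\<in>L. \<Sum>l4\<in>L. (if l2 = l1 then x l1 * y l2 else 0) * (if l4 = l3 then x l3 * y l4 else 0))"
    by (intro sum.cong refl) auto
  also have "\<dots> = (\<Sum>l1\<in>L. \<Sum>l2\<in>L. if l2 = l1 then x l1 * y l2 else 0) *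
                   (\<Sum>l3\<in>L. \<Sum>l4\<in>L. if l4 = l3 then x l3 * y l4 else 0)"
    by (simp only: sum_product, rule sum.cong[OF refl], rule sum.swap)
  finally show ?thesis
    using assms by (simp add: power2_eq_square)
qed

lemma sum_pairing_kernel:
  fixes x y :: "'i \<Rightarrow> real"
  assumes "finite L" "l1 \<in> L" "l2 \<in> L" "l1 \<noteq> l2"
  shows "(\<Sum>l3\<in>L. \<Sum>l4\<in>L. x l3 * y l4 * (if {l3, l4} = {l1, l2} then 1 else 0)) = x l1 * y l2 + x l2 * y l1"
proof -
  have "(\<Sum>l3\<in>L. \<Sum>l4\<in>L. x l3 * y l4 * (if {l3, l4} = {l1, l2} then 1 else 0)) =
      (\<Sum>l3\<in>L. \<Sum>l4\<in>L. (if l4 = l2 then if l3 = l1 then x l3 * y l4 else 0 else 0) +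
                         (if l4 = l1 then if l3 = l2 then x l3 * y l4 else 0 else 0))"
    using assms by (intro sum.cong refl) (auto simp: doubleton_eq_iff)
  then show ?thesis
    using assms by (simp add: sum.distrib)
qed

lemma sum_off_diagonal_kernel:
  fixes x y :: "'i \<Rightarrow> real"
  assumes L: "finite L"
  shows "(\<Sum>l1\<in>L. \<Sum>l2\<in>L. \<Sum>l3\<in>L. \<Sum>l4\<in>L.
            x l1 * y l2 * x l3 * y l4 * (if l1 \<noteq> l2 \<and> {l3, l4} = {l1, l2} then 1 else 0)) =
         (\<Sum>l\<in>L. (x l)\<^sup>2) * (\<Sum>l\<in>L. (y l)\<^sup>2) + (\<Sum>l\<in>L. x l * y l)\<^sup>2 - 2 * (\<Sum>l\<in>L. (x l)\<^sup>2 * (y l)\<^sup>2)"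
proof -
  have "(\<Sum>l3\<in>L. \<Sum>l4\<in>L. x l1 * y l2 * x l3 * y l4 * (if l1 \<noteq> l2 \<and> {l3, l4} = {l1, l2} then 1 else 0)) =
      (if l1 = l2 then 0 else (x l1)\<^sup>2 * (y l2)\<^sup>2 + x l1 * y l1 * (x l2 * y l2))" if "l1 \<in> L" "l2 \<in> L" for l1 l2
  proof (cases "l1 = l2")
    case False
    have "(\<Sum>l3\<in>L. \<Sum>l4\<in>L. x l1 * y l2 * x l3 * y l4 * (if l1 \<noteq> l2 \<and> {l3, l4} = {l1, l2} then 1 else 0)) =
        x l1 * y l2 * (\<Sum>l3\<in>L. \<Sum>l4\<in>L. x l3 * y l4 * (if {l3, l4} = {l1, l2} then 1 else 0))"
      using False by (simp add: sum_distrib_left mult.assoc)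
    also have "\<dots> = x l1 * y l2 * (x l1 * y l2 + x l2 * y l1)"
      using sum_pairing_kernel[OF L that False] by simp
    finally show ?thesis
      using False by (simp add: power2_eq_square algebra_simps)
  qed simp
  then have "(\<Sum>l1\<in>L. \<Sum>l2\<in>L. \<Sum>l3\<in>L. \<Sum>l4\<in>L.
        x l1 * y l2 * x l3 * y l4 * (if l1 \<noteq> l2 \<and> {l3, l4} = {l1, l2} then 1 else 0)) =
      (\<Sum>l1\<in>L. \<Sum>l2\<in>L. if l1 = l2 then 0 else (x l1)\<^sup>2 * (y l2)\<^sup>2 + x l1 * y l1 * (x l2 * y l2))"
    by (intro sum.cong refl) auto
  also have "\<dots> = (\<Sum>l1\<in>L. \<Sum>l2\<in>L. (x l1)\<^sup>2 * (y l2)\<^sup>2 + x l1 * y l1 * (x l2 * y l2)) -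
      (\<Sum>l\<in>L. (x l)\<^sup>2 * (y l)\<^sup>2 + x l * y l * (x l * y l))"
    using L by (rule sum_off_diagonal)
  also have "\<dots> = (\<Sum>l\<in>L. (x l)\<^sup>2) * (\<Sum>l\<in>L. (y l)\<^sup>2) + (\<Sum>l\<in>L. x l * y l)\<^sup>2 - 2 * (\<Sum>l\<in>L. (x l)\<^sup>2 * (y l)\<^sup>2)"
    by (simp only: sum.distrib sum_product[symmetric]) (simp add: power2_eq_square algebra_simps sum_distrib_left)
  finally show ?thesis .
qed

definition count_sketch_variance :: "nat \<Rightarrow> nat \<Rightarrow> (nat \<Rightarrow> real) \<Rightarrow> (nat \<Rightarrow> real) \<Rightarrow> real" where
  "count_sketch_variance B d x y =
     ((\<Sum>l\<in>{1..d}. (x l)\<^sup>2) * (\<Sum>l\<in>{1..d}. (y l)\<^sup>2) + (\<Sum>l\<in>{1..d}. x l * y l)\<^sup>2 -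
      2 * (\<Sum>l\<in>{1..d}. (x l)\<^sup>2 * (y l)\<^sup>2)) / B"

lemma sum_kernel_moment:
  fixes x y :: "nat \<Rightarrow> real"
  shows "(\<Sum>l1\<in>{1..d}. \<Sum>l2\<in>{1..d}. \<Sum>l3\<in>{1..d}. \<Sum>l4\<in>{1..d}.
            x l1 * y l2 * x l3 * y l4 * kernel_moment B l1 l2 l3 l4) =
         (\<Sum>l\<in>{1..d}. x l * y l)\<^sup>2 + count_sketch_variance B d x y"
proof -
  have "x l1 * y l2 * x l3 * y l4 * kernel_moment B l1 l2 l3 l4 =
      x l1 * y l2 * x l3 * y l4 * (if l1 = l2 \<and> l3 = l4 then 1 else 0) +
      x l1 * y l2 * x l3 * y l4 * (if l1 \<noteq> l2 \<and> {l3, l4} = {l1, l2} then 1 else 0) / B" for l1 l2 l3 l4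
    by (simp add: kernel_moment_def)
  then show ?thesis
    unfolding count_sketch_variance_def
    by (simp only: sum.distrib sum_divide_distrib[symmetric] sum_diagonal_kernel sum_off_diagonal_kernel finite_atLeastAtMost)
qed

definition sketch_tags :: "nat \<Rightarrow> rtag set" where
  "sketch_tags d = H ` {1..d} \<union> S ` {1..d}"

lemma measurable_sign_of [measurable]: "sign_of \<in> borel_measurable borel"
  unfolding sign_of_def by measurable

lemma measurable_bin_of [measurable]: "bin_of B \<in> borel_measurable borel"
proof -
  have "real ` {1..B} \<in> sets borel"
    by (intro borel_closed finite_imp_closed) auto
  then show ?thesis
    unfolding bin_of_def[abs_def] by measurable
qed

lemma measurable_sketch_kernel [measurable]:
  "sketch_kernel B l l' \<in> borel_measurable (PiM A (\<lambda>_. borel))"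
  unfolding sketch_kernel_def by measurable

lemma sketch_kernel_diag [simp]: "sketch_kernel B l l w = 1"
  by (simp add: sketch_kernel_def sign_of_def)

lemma sketch_kernel_commute: "sketch_kernel B l l' w = sketch_kernel B l' l w"
  by (auto simp: sketch_kernel_def)

lemma abs_sketch_kernel_le: "\<bar>sketch_kernel B l l' w\<bar> \<le> 1"
  by (simp add: sketch_kernel_def sign_of_def)

locale count_sketch_model = prob_space M for M :: "'a measure" +
  fixes X :: "rtag \<Rightarrow> 'a \<Rightarrow> real" and I :: "rtag set" and d B :: nat
  assumes indep: "indep_vars (\<lambda>_. borel) X I"
    and sketch_tags_subset: "sketch_tags d \<subseteq> I"
    and B_pos: "B \<ge> 1"
    and distH: "\<And>l m. l \<in> {1..d} \<Longrightarrow> m \<in> {1..B} \<Longrightarrow> prob {\<omega> \<in> space M. X (H l) \<omega> = real m} = 1 / B"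
    and distS: "\<And>l. l \<in> {1..d} \<Longrightarrow>
                  prob {\<omega> \<in> space M. X (S l) \<omega> = 1} = 1 / 2 \<and> prob {\<omega> \<in> space M. X (S l) \<omega> = -1} = 1 / 2"
begin

abbreviation tags_on :: "rtag set \<Rightarrow> 'a \<Rightarrow> rtag \<Rightarrow> real" where
  "tags_on A \<omega> \<equiv> restrict (\<lambda>t. X t \<omega>) A"

lemma random_variable_X: "t \<in> I \<Longrightarrow> random_variable borel (X t)"
  using indep by (auto simp: indep_vars_def)

lemma random_variable_H [measurable]: "l \<in> {1..d} \<Longrightarrow> random_variable borel (X (H l))"
  using sketch_tags_subset by (intro random_variable_X) (auto simp: sketch_tags_def)

lemma random_variable_S [measurable]: "l \<in> {1..d} \<Longrightarrow> random_variable borel (X (S l))"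
  using sketch_tags_subset by (intro random_variable_X) (auto simp: sketch_tags_def)

lemma measurable_tags_on: "A \<subseteq> I \<Longrightarrow> tags_on A \<in> measurable M (PiM A (\<lambda>_. borel))"
  using random_variable_X by (intro measurable_restrict) auto

lemma AE_sketch_values: "AE \<omega> in M. \<forall>l\<in>{1..d}. X (H l) \<omega> \<in> real ` {1..B} \<and> X (S l) \<omega> \<in> {-1, 1}"
proof (rule AE_ball_countable')
  fix l :: nat assume l: "l \<in> {1..d}"
  have "(\<Sum>a\<in>real ` {1..B}. prob {\<omega>\<in>space M. X (H l) \<omega> = a}) = (\<Sum>m\<in>{1..B}. prob {\<omega>\<in>space M. X (H l) \<omega> = real m})"
    by (subst sum.reindex) (auto simp: inj_on_def)
  also have "\<dots> = 1"
    using distH[OF l] B_pos by simp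
  finally have "AE \<omega> in M. X (H l) \<omega> \<in> real ` {1..B}"
    using l by (intro AE_in_finite) auto
  moreover have "AE \<omega> in M. X (S l) \<omega> \<in> {-1, 1}"
    using distS[OF l] l by (intro AE_in_finite) auto
  ultimately show "AE \<omega> in M. X (H l) \<omega> \<in> real ` {1..B} \<and> X (S l) \<omega> \<in> {-1, 1}"
    by eventually_elim auto
qed simp

lemma expectation_sign:
  assumes l: "l \<in> {1..d}"
  shows "expectation (\<lambda>\<omega>. sign_of (X (S l) \<omega>)) = 0"
proof -
  let ?A = "{\<omega>\<in>space M. X (S l) \<omega> = 1}"
  have A: "?A \<in> events"
    using l by measurable
  have "expectation (\<lambda>\<omega>. sign_of (X (S l) \<omega>)) = expectation (\<lambda>\<omega>. 2 * indicator ?A \<omega> - 1)"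
    by (intro Bochner_Integration.integral_cong) (auto simp: sign_of_def)
  also have "\<dots> = 2 * prob ?A - 1"
    using A by (simp add: prob_space emeasure_eq_measure)
  finally show ?thesis
    using distS[OF l] by simp
qed

lemma expectation_sign_mult_indep:
  fixes g :: "(rtag \<Rightarrow> real) \<Rightarrow> real"
  assumes l: "l \<in> {1..d}" and A: "A \<subseteq> I" "S l \<notin> A"
    and g: "g \<in> borel_measurable (PiM A (\<lambda>_. borel))" "\<And>w. \<bar>g w\<bar> \<le> c"
  shows "expectation (\<lambda>\<omega>. sign_of (X (S l) \<omega>) * g (tags_on A \<omega>)) = 0"
proof -
  have Sl: "{S l} \<subseteq> I"
    using l sketch_tags_subset by (auto simp: sketch_tags_def)
  have sign: "(\<lambda>w. sign_of (w (S l))) \<in> borel_measurable (PiM {S l} (\<lambda>_. borel))"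
    by measurable
  have "expectation (\<lambda>\<omega>. sign_of (tags_on {S l} \<omega> (S l)) * g (tags_on A \<omega>)) =
      expectation (\<lambda>\<omega>. sign_of (tags_on {S l} \<omega> (S l))) * expectation (\<lambda>\<omega>. g (tags_on A \<omega>))"
  proof (rule integral_mult_indep_restrict[OF indep Sl A(1) _ sign _ g(1)])
    show "integrable M (\<lambda>\<omega>. sign_of (tags_on {S l} \<omega> (S l)))"
      by (rule integrable_bounded_restrict[OF indep Sl sign, of 1]) (simp add: sign_of_def)
    show "integrable M (\<lambda>\<omega>. g (tags_on A \<omega>))"
      by (rule integrable_bounded_restrict[OF indep A(1) g])
  qed (use A in auto)
  then show ?thesis
    using expectation_sign[OF l] by simp
qed

lemma expectation_bin_collision:
  assumes l: "l \<in> {1..d}" "l' \<in> {1..d}" "l \<noteq> l'"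
  shows "expectation (\<lambda>\<omega>. if bin_of B (X (H l) \<omega>) = bin_of B (X (H l') \<omega>) then 1 else 0) = 1 / B"
proof -
  let ?hit = "\<lambda>l m \<omega>. if X (H l) \<omega> = real m then 1 else 0 :: real"
  have H: "{H l} \<subseteq> I" "{H l'} \<subseteq> I"
    using l sketch_tags_subset by (auto simp: sketch_tags_def)
  have hit: "(\<lambda>w. if w (H l) = real m then 1 else 0 :: real) \<in> borel_measurable (PiM {H l} (\<lambda>_. borel))" for l m
    by measurable
  have "AE \<omega> in M. (if bin_of B (X (H l) \<omega>) = bin_of B (X (H l') \<omega>) then 1 else 0) =
      (\<Sum>m\<in>{1..B}. ?hit l m \<omega> * ?hit l' m \<omega>)"
    using AE_sketch_values
  proof eventually_elim
    case (elim \<omega>)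
    then have "X (H l) \<omega> \<in> real ` {1..B}" "X (H l') \<omega> \<in> real ` {1..B}"
      using l by auto
    then show ?case
      by (auto simp: bin_of_def if_distrib[of "\<lambda>c. c * _"] sum.delta cong: if_cong)
  qed
  then have "expectation (\<lambda>\<omega>. if bin_of B (X (H l) \<omega>) = bin_of B (X (H l') \<omega>) then 1 else 0) =
      expectation (\<lambda>\<omega>. \<Sum>m\<in>{1..B}. ?hit l m \<omega> * ?hit l' m \<omega>)"
    using l by (intro integral_cong_AE) auto
  also have "\<dots> = (\<Sum>m\<in>{1..B}. expectation (?hit l m) * expectation (?hit l' m))"
  proof -
    have int_hit: "integrable M (?hit l0 m)" if "l0 \<in> {1..d}" for l0 m
    proof (rule integrable_const_bound[where B = 1])
      show "?hit l0 m \<in> borel_measurable M"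
        using that by measurable
    qed simp
    have "expectation (\<lambda>\<omega>. ?hit l m \<omega> * ?hit l' m \<omega>) = expectation (?hit l m) * expectation (?hit l' m)"
      and "integrable M (\<lambda>\<omega>. ?hit l m \<omega> * ?hit l' m \<omega>)" for m
      using integral_mult_indep_restrict[OF indep H _ hit[of l m] _ hit[of l' m]] int_hit l by simp_all
    then show ?thesis
      by (simp add: Bochner_Integration.integral_sum)
  qed
  also have "\<dots> = (\<Sum>m\<in>{1..B}. 1 / B * (1 / B))"
    using l distH by (simp add: expectation_indicator_eq)
  also have "\<dots> = 1 / B"
    using B_pos by (simp add: power2_eq_square)
  finally show ?thesis .
qed

abbreviation sketch_vals :: "'a \<Rightarrow> rtag \<Rightarrow> real" where
  "sketch_vals \<equiv> tags_on (sketch_tags d)"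

lemma expectation_kernel_product_eq_0:
  assumes l: "l1 \<in> {1..d}" "l2 \<in> {1..d}" "l3 \<in> {1..d}" "l4 \<in> {1..d}" and fresh: "l1 \<notin> {l2, l3, l4}"
  shows "expectation (\<lambda>\<omega>. sketch_kernel B l1 l2 (sketch_vals \<omega>) * sketch_kernel B l3 l4 (sketch_vals \<omega>)) = 0"
proof -
  let ?A = "sketch_tags d - {S l1}"
  define g where "g w = sign_of (w (S l2)) * (if bin_of B (w (H l1)) = bin_of B (w (H l2)) then 1 else 0) *
      sketch_kernel B l3 l4 w" for w
  have "expectation (\<lambda>\<omega>. sign_of (X (S l1) \<omega>) * g (tags_on ?A \<omega>)) = 0"
  proof (rule expectation_sign_mult_indep[OF l(1)])
    show "?A \<subseteq> I" "S l1 \<notin> ?A"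
      using sketch_tags_subset by auto
    show "g \<in> borel_measurable (PiM ?A (\<lambda>_. borel))"
      unfolding g_def by measurable
    show "\<bar>g w\<bar> \<le> 1" for w
      unfolding g_def abs_mult using abs_sketch_kernel_le[of B l3 l4 w] by (simp add: sign_of_def)
  qed
  moreover have "sign_of (X (S l1) \<omega>) * g (tags_on ?A \<omega>) =
      sketch_kernel B l1 l2 (sketch_vals \<omega>) * sketch_kernel B l3 l4 (sketch_vals \<omega>)" for \<omega>
    using l fresh unfolding g_def sketch_kernel_def by (auto simp: sketch_tags_def)
  ultimately show ?thesis
    by simp
qed

lemma expectation_sketch_kernel:
  assumes "l \<in> {1..d}" "l' \<in> {1..d}"
  shows "expectation (\<lambda>\<omega>. sketch_kernel B l l' (sketch_vals \<omega>)) = (if l = l' then 1 else 0)"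
proof (cases "l = l'")
  case False
  have "expectation (\<lambda>\<omega>. sketch_kernel B l l' (sketch_vals \<omega>) * sketch_kernel B l' l' (sketch_vals \<omega>)) = 0"
    using assms False by (intro expectation_kernel_product_eq_0) auto
  then show ?thesis
    using False by simp
qed (simp add: prob_space)

lemma expectation_kernel_product:
  assumes l: "l1 \<in> {1..d}" "l2 \<in> {1..d}" "l3 \<in> {1..d}" "l4 \<in> {1..d}"
  shows "expectation (\<lambda>\<omega>. sketch_kernel B l1 l2 (sketch_vals \<omega>) * sketch_kernel B l3 l4 (sketch_vals \<omega>)) =
         kernel_moment B l1 l2 l3 l4"
proof -
  consider (diag) "l1 = l2" | (diag') "l1 \<noteq> l2" "l3 = l4" | (pair) "l1 \<noteq> l2" "{l3, l4} = {l1, l2}"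
    | (fresh1) "l1 \<notin> {l2, l3, l4}" | (fresh2) "l2 \<notin> {l1, l3, l4}"
    by (auto simp: doubleton_eq_iff)
  then show ?thesis
  proof cases
    case diag
    then show ?thesis
      using expectation_sketch_kernel[OF l(3,4)] by (simp add: kernel_moment_def)
  next
    case diag'
    then show ?thesis
      using expectation_sketch_kernel[OF l(1,2)] by (auto simp: kernel_moment_def doubleton_eq_iff)
  next
    case pair
    have "sketch_kernel B l1 l2 (sketch_vals \<omega>) * sketch_kernel B l3 l4 (sketch_vals \<omega>) =
        (if bin_of B (X (H l1) \<omega>) = bin_of B (X (H l2) \<omega>) then 1 else 0)" for \<omega>
      using l pair by (auto simp: sketch_kernel_def sketch_tags_def sign_of_def doubleton_eq_iff)
    then show ?thesis
      using pair expectation_bin_collision[OF l(1,2) pair(1)] by (simp add: kernel_moment_def)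
  next
    case fresh1
    then show ?thesis
      using expectation_kernel_product_eq_0[OF l fresh1] by (auto simp: kernel_moment_def doubleton_eq_iff)
  next
    case fresh2
    then have "expectation (\<lambda>\<omega>. sketch_kernel B l2 l1 (sketch_vals \<omega>) * sketch_kernel B l3 l4 (sketch_vals \<omega>)) = 0"
      using l by (intro expectation_kernel_product_eq_0) auto
    then show ?thesis
      using fresh2 by (subst sketch_kernel_commute) (auto simp: kernel_moment_def doubleton_eq_iff)
  qed
qed

definition sketch_inner :: "'a \<Rightarrow> (nat \<Rightarrow> real) \<Rightarrow> (nat \<Rightarrow> real) \<Rightarrow> real" where
  "sketch_inner \<omega> x y = (\<Sum>m\<in>{1..B}.
     count_sketch d (\<lambda>l. X (H l) \<omega>) (\<lambda>l. X (S l) \<omega>) x m * count_sketch d (\<lambda>l. X (H l) \<omega>) (\<lambda>l. X (S l) \<omega>) y m)"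

lemma measurable_sketch_inner [measurable]:
  assumes "\<And>l. (\<lambda>\<omega>. x \<omega> l) \<in> borel_measurable M" "\<And>l. (\<lambda>\<omega>. y \<omega> l) \<in> borel_measurable M"
  shows "(\<lambda>\<omega>. sketch_inner \<omega> (x \<omega>) (y \<omega>)) \<in> borel_measurable M"
  unfolding sketch_inner_def count_sketch_def using assms by measurable

lemma sketch_inner_cong:
  assumes "\<And>l. l \<in> {1..d} \<Longrightarrow> x l = x' l" "\<And>l. l \<in> {1..d} \<Longrightarrow> y l = y' l"
  shows "sketch_inner \<omega> x y = sketch_inner \<omega> x' y'"
  unfolding sketch_inner_def count_sketch_def using assms by (intro sum.cong refl arg_cong2[where f = times]) auto

lemma AE_sketch_inner_eq:
  "AE \<omega> in M. \<forall>x y. sketch_inner \<omega> x y =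
     (\<Sum>l\<in>{1..d}. \<Sum>l'\<in>{1..d}. x l * y l' * sketch_kernel B l l' (sketch_vals \<omega>))"
  using AE_sketch_values
proof eventually_elim
  case (elim \<omega>)
  let ?h = "\<lambda>l. bin_of B (X (H l) \<omega>)" and ?s = "\<lambda>l. sign_of (X (S l) \<omega>)"
  show ?case
  proof (intro allI)
    fix x y :: "nat \<Rightarrow> real"
    have "sketch_inner \<omega> x y = (\<Sum>m\<in>{1..B}. count_sketch d ?h ?s x m * count_sketch d ?h ?s y m)"
      unfolding sketch_inner_def count_sketch_def using elim
      by (intro sum.cong refl arg_cong2[where f = times]) (auto simp: bin_of_def sign_of_def)
    also have "\<dots> = (\<Sum>l\<in>{1..d}. \<Sum>l'\<in>{1..d}. x l * y l' * (?s l * ?s l' * (if ?h l = ?h l' then 1 else 0)))"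
      using B_pos by (intro count_sketch_inner) (auto simp: bin_of_def)
    also have "\<dots> = (\<Sum>l\<in>{1..d}. \<Sum>l'\<in>{1..d}. x l * y l' * sketch_kernel B l l' (sketch_vals \<omega>))"
      by (intro sum.cong refl) (simp add: sketch_kernel_def sketch_tags_def)
    finally show "sketch_inner \<omega> x y = (\<Sum>l\<in>{1..d}. \<Sum>l'\<in>{1..d}. x l * y l' * sketch_kernel B l l' (sketch_vals \<omega>))" .
  qed
qed

lemma measurable_sketch_kernel_vals [measurable]:
  "(\<lambda>\<omega>. sketch_kernel B l l' (sketch_vals \<omega>)) \<in> borel_measurable M"
  using measurable_compose[OF measurable_tags_on[OF sketch_tags_subset] measurable_sketch_kernel]
  by (simp add: comp_def)

lemma AE_abs_sketch_inner_le:
  fixes c :: real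
  shows "AE \<omega> in M. \<forall>x y. (\<forall>l. \<bar>x l\<bar> \<le> c) \<longrightarrow> (\<forall>l. \<bar>y l\<bar> \<le> c) \<longrightarrow>
           \<bar>sketch_inner \<omega> x y\<bar> \<le> (d * c)\<^sup>2"
  using AE_sketch_inner_eq
proof eventually_elim
  case (elim \<omega>)
  show ?case
  proof (intro allI impI)
    fix x y :: "nat \<Rightarrow> real" assume x: "\<forall>l. \<bar>x l\<bar> \<le> c" and y: "\<forall>l. \<bar>y l\<bar> \<le> c"
    let ?a = "\<lambda>l l'. x l * y l' * sketch_kernel B l l' (sketch_vals \<omega>)"
    have "\<bar>sketch_inner \<omega> x y\<bar> \<le> (\<Sum>l\<in>{1..d}. \<Sum>l'\<in>{1..d}. \<bar>?a l l'\<bar>)"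
      unfolding elim[rule_format] by (rule order_trans[OF sum_abs sum_mono[OF sum_abs]])
    also have "\<dots> \<le> (\<Sum>l\<in>{1..d}. \<Sum>l'\<in>{1..d}. c * c * 1)"
      using x y abs_sketch_kernel_le by (intro sum_mono abs_mult_le_mult) auto
    finally show "\<bar>sketch_inner \<omega> x y\<bar> \<le> (d * c)\<^sup>2"
      by (simp add: power2_eq_square algebra_simps)
  qed
qed

(* Weighting by a function \<phi> of the tags in A gives the plain moments (\<phi> = 1) as well as the
   moments on an event determined by these tags (\<phi> its indicator). *)
context
  fixes A :: "rtag set" and c :: real and \<phi> :: "(rtag \<Rightarrow> real) \<Rightarrow> real" and x y :: "(rtag \<Rightarrow> real) \<Rightarrow> nat \<Rightarrow> real"
  assumes A: "A \<subseteq> I" "A \<inter> sketch_tags d = {}"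
    and \<phi>: "\<phi> \<in> borel_measurable (PiM A (\<lambda>_. borel))" "\<And>w. \<bar>\<phi> w\<bar> \<le> c"
    and x: "\<And>l. (\<lambda>w. x w l) \<in> borel_measurable (PiM A (\<lambda>_. borel))" "\<And>w l. \<bar>x w l\<bar> \<le> c"
    and y: "\<And>l. (\<lambda>w. y w l) \<in> borel_measurable (PiM A (\<lambda>_. borel))" "\<And>w l. \<bar>y w l\<bar> \<le> c"
begin

private lemma measurable_weights [measurable]:
  "(\<lambda>\<omega>. \<phi> (tags_on A \<omega>)) \<in> borel_measurable M"
  "(\<lambda>\<omega>. x (tags_on A \<omega>) l) \<in> borel_measurable M"
  "(\<lambda>\<omega>. y (tags_on A \<omega>) l) \<in> borel_measurable M"
  using measurable_compose[OF measurable_tags_on[OF A(1)] \<phi>(1)]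
    measurable_compose[OF measurable_tags_on[OF A(1)] x(1)]
    measurable_compose[OF measurable_tags_on[OF A(1)] y(1)]
  by (simp_all add: comp_def)

lemma sketch_first_moment:
  "expectation (\<lambda>\<omega>. \<phi> (tags_on A \<omega>) * sketch_inner \<omega> (x (tags_on A \<omega>)) (y (tags_on A \<omega>))) =
   expectation (\<lambda>\<omega>. \<phi> (tags_on A \<omega>) * (\<Sum>l\<in>{1..d}. x (tags_on A \<omega>) l * y (tags_on A \<omega>) l))"
proof -
  let ?L = "{1..d}"
  define f where "f = (\<lambda>(l, l') w. \<phi> w * x w l * y w l')"
  define g where "g = (\<lambda>(l, l'). sketch_kernel B l l')"
  have "expectation (\<lambda>\<omega>. \<phi> (tags_on A \<omega>) * sketch_inner \<omega> (x (tags_on A \<omega>)) (y (tags_on A \<omega>))) =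
      expectation (\<lambda>\<omega>. \<Sum>j\<in>?L \<times> ?L. f j (tags_on A \<omega>) * g j (sketch_vals \<omega>))"
    using AE_sketch_inner_eq
    by (intro integral_cong_AE) (auto simp: f_def g_def sum.cartesian_product' sum_distrib_left mult.assoc)
  also have "\<dots> = expectation (\<lambda>\<omega>. \<Sum>j\<in>?L \<times> ?L. f j (tags_on A \<omega>) * expectation (\<lambda>\<omega>'. g j (sketch_vals \<omega>')))"
  proof (rule integral_sum_indep_restrict[OF indep A(1) sketch_tags_subset A(2)])
    show "\<bar>f j w\<bar> \<le> c * c * c" for j w
      using \<phi>(2) x(2) y(2) by (cases j) (auto simp: f_def intro!: abs_mult_le_mult)
    show "\<bar>g j w\<bar> \<le> 1" for j w
      by (cases j) (auto simp: g_def abs_sketch_kernel_le)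
  qed (auto simp: f_def g_def intro!: borel_measurable_times \<phi>(1) x(1) y(1))
  also have "\<dots> = expectation (\<lambda>\<omega>. \<Sum>j\<in>?L \<times> ?L. f j (tags_on A \<omega>) * (if fst j = snd j then 1 else 0))"
    by (intro Bochner_Integration.integral_cong refl sum.cong) (auto simp: g_def expectation_sketch_kernel prob_space)
  also have "\<dots> = expectation (\<lambda>\<omega>. \<phi> (tags_on A \<omega>) * (\<Sum>l\<in>?L. x (tags_on A \<omega>) l * y (tags_on A \<omega>) l))"
    by (intro Bochner_Integration.integral_cong refl)
       (simp add: f_def sum.cartesian_product' sum_distrib_left mult.assoc if_distrib[of "\<lambda>z. _ * z"] cong: if_cong)
  finally show ?thesis .
qed

lemma sketch_second_moment:
  "expectation (\<lambda>\<omega>. \<phi> (tags_on A \<omega>) * (sketch_inner \<omega> (x (tags_on A \<omega>)) (y (tags_on A \<omega>)))\<^sup>2) =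
   expectation (\<lambda>\<omega>. \<phi> (tags_on A \<omega>) *
     ((\<Sum>l\<in>{1..d}. x (tags_on A \<omega>) l * y (tags_on A \<omega>) l)\<^sup>2 +
      count_sketch_variance B d (x (tags_on A \<omega>)) (y (tags_on A \<omega>))))"
proof -
  let ?L = "{1..d}"
  define f where "f = (\<lambda>(l1, l2, l3, l4) w. \<phi> w * x w l1 * y w l2 * x w l3 * y w l4)"
  define g where "g = (\<lambda>(l1, l2, l3, l4). \<lambda>w. sketch_kernel B l1 l2 w * sketch_kernel B l3 l4 w)"
  have "expectation (\<lambda>\<omega>. \<phi> (tags_on A \<omega>) * (sketch_inner \<omega> (x (tags_on A \<omega>)) (y (tags_on A \<omega>)))\<^sup>2) =
      expectation (\<lambda>\<omega>. \<Sum>j\<in>?L \<times> ?L \<times> ?L \<times> ?L. f j (tags_on A \<omega>) * g j (sketch_vals \<omega>))"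
    using AE_sketch_inner_eq
    by (intro integral_cong_AE)
       (auto simp: f_def g_def square_double_sum sum.cartesian_product' sum_distrib_left ac_simps)
  also have "\<dots> = expectation (\<lambda>\<omega>. \<Sum>j\<in>?L \<times> ?L \<times> ?L \<times> ?L. f j (tags_on A \<omega>) * expectation (\<lambda>\<omega>'. g j (sketch_vals \<omega>')))"
  proof (rule integral_sum_indep_restrict[OF indep A(1) sketch_tags_subset A(2)])
    show "\<bar>f j w\<bar> \<le> c * c * c * c * c" for j w
      using \<phi>(2) x(2) y(2) by (cases j) (auto simp: f_def intro!: abs_mult_le_mult)
    show "\<bar>g j w\<bar> \<le> 1" for j w
      by (cases j) (auto simp: g_def abs_mult intro!: mult_le_one abs_sketch_kernel_le)
  qed (auto simp: f_def g_def intro!: borel_measurable_times \<phi>(1) x(1) y(1))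
  also have "\<dots> = expectation (\<lambda>\<omega>. \<Sum>j\<in>?L \<times> ?L \<times> ?L \<times> ?L. f j (tags_on A \<omega>) *
      (case j of (l1, l2, l3, l4) \<Rightarrow> kernel_moment B l1 l2 l3 l4))"
    by (intro Bochner_Integration.integral_cong refl sum.cong) (auto simp: g_def expectation_kernel_product)
  also have "\<dots> = expectation (\<lambda>\<omega>. \<phi> (tags_on A \<omega>) * (\<Sum>l1\<in>?L. \<Sum>l2\<in>?L. \<Sum>l3\<in>?L. \<Sum>l4\<in>?L.
      x (tags_on A \<omega>) l1 * y (tags_on A \<omega>) l2 * x (tags_on A \<omega>) l3 * y (tags_on A \<omega>) l4 * kernel_moment B l1 l2 l3 l4))"
    by (intro Bochner_Integration.integral_cong refl) (simp add: f_def sum.cartesian_product' sum_distrib_left ac_simps)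
  finally show ?thesis
    by (simp only: sum_kernel_moment)
qed

end

end

section \<open>GCWS outputs as measurable functions of the tags\<close>

lemma arg_min_on_cong:
  "(\<And>x. x \<in> K \<Longrightarrow> f x = g x) \<Longrightarrow> arg_min_on f K = arg_min_on g K"
  unfolding arg_min_on_def arg_min_def is_arg_min_def by (metis (no_types, lifting))

lemma measurable_arg_min_on:
  fixes f :: "'a \<Rightarrow> 'i \<Rightarrow> real"
  assumes K: "finite K" "K \<noteq> {}" and f: "\<And>i. i \<in> K \<Longrightarrow> (\<lambda>\<omega>. f \<omega> i) \<in> borel_measurable M"
  shows "(\<lambda>\<omega>. arg_min_on (f \<omega>) K) \<in> measurable M (count_space K)"
proof -
  define minimizers where "minimizers \<omega> = {x \<in> K. \<forall>y\<in>K. f \<omega> x \<le> f \<omega> y}" for \<omega>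
  have arg_min_eq: "arg_min_on (f \<omega>) K = (SOME x. x \<in> minimizers \<omega>)" for \<omega>
    unfolding arg_min_on_def arg_min_def is_arg_min_def minimizers_def by (simp add: not_less Ball_def)
  have "arg_min_on (f \<omega>) K \<in> minimizers \<omega>" for \<omega>
    using arg_min_if_finite[OF K, of "f \<omega>"] by (auto simp: minimizers_def not_less)
  then have in_K: "(SOME x. x \<in> minimizers \<omega>) \<in> K" for \<omega>
    by (metis (no_types, lifting) minimizers_def mem_Collect_eq someI)
  have "minimizers \<in> measurable M (count_space (Pow K))"
  proof (subst measurable_count_space_eq2)
    show "minimizers \<in> space M \<rightarrow> Pow K \<and> (\<forall>T\<in>Pow K. minimizers -` {T} \<inter> space M \<in> sets M)"
    proof safe
      fix T assume "T \<subseteq> K"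
      then have "minimizers -` {T} \<inter> space M =
          {\<omega> \<in> space M. \<forall>x\<in>K. x \<in> T \<longleftrightarrow> (\<forall>y\<in>K. f \<omega> x \<le> f \<omega> y)}"
        unfolding minimizers_def by blast
      also have "\<dots> \<in> sets M"
        using K f by measurable
      finally show "minimizers -` {T} \<inter> space M \<in> sets M" .
    qed (auto simp: minimizers_def)
  qed (use K in simp)
  then have "(\<lambda>\<omega>. SOME x. x \<in> minimizers \<omega>) \<in> measurable M (count_space UNIV)"
    by (rule measurable_compose[where g = "\<lambda>T. SOME x. x \<in> T", unfolded comp_def]) simp
  then have "(\<lambda>\<omega>. SOME x. x \<in> minimizers \<omega>) -` {i} \<inter> space M \<in> sets M" for i
    by (rule measurable_sets) simp
  then show ?thesis
    using in_K by (simp add: arg_min_eq measurable_count_space_eq2[OF K(1)] Pi_iff)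
qed

lemma sign_split_support_nonempty:
  assumes "\<exists>i\<in>{1..D}. u i \<noteq> 0"
  shows "{i \<in> {1..2*D}. sign_split u i > 0} \<noteq> {}"
proof -
  obtain i where i: "i \<in> {1..D}" "u i \<noteq> 0"
    using assms by blast
  show ?thesis
  proof (cases "u i > 0")
    case True
    then have "sign_split u (2*i - 1) > 0"
      using i by (auto simp: sign_split_def odd_pos)
    then show ?thesis
      using i by (intro ex_in_conv[THEN iffD1] exI[of _ "2*i - 1"]) auto
  next
    case False
    then have "sign_split u (2*i) > 0"
      using i by (auto simp: sign_split_def)
    then show ?thesis
      using i by (intro ex_in_conv[THEN iffD1] exI[of _ "2*i"]) auto
  qed
qed

lemma gcws_cong:
  assumes support: "{i \<in> {1..2*D}. ut i > 0} \<noteq> {}"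
    and agree: "\<And>i. i \<in> {1..2*D} \<Longrightarrow> r i = r' i \<and> c i = c' i \<and> beta i = beta' i"
  shows "gcws D p ut r c beta = gcws D p ut r' c' beta'"
proof -
  let ?K = "{i \<in> {1..2*D}. ut i > 0}"
  have arg_min_eq: "arg_min_on (gcws_a p ut r c beta) ?K = arg_min_on (gcws_a p ut r' c' beta') ?K"
    using agree by (intro arg_min_on_cong) (auto simp: gcws_a_def gcws_t_def)
  have "arg_min_on (gcws_a p ut r' c' beta') ?K \<in> ?K"
    using support by (intro arg_min_if_finite) auto
  then show ?thesis
    using agree unfolding gcws_def Let_def arg_min_eq by (auto simp: gcws_t_def)
qed

lemma fst_gcws_mem:
  assumes "{i \<in> {1..2*D}. ut i > 0} \<noteq> {}"
  shows "fst (gcws D p ut r c beta) \<in> {1..2*D}"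
  using arg_min_if_finite(1)[OF _ assms] unfolding gcws_def Let_def by auto

lemma measurable_gcws:
  fixes r c beta :: "'a \<Rightarrow> nat \<Rightarrow> real"
  assumes support: "{i \<in> {1..2*D}. ut i > 0} \<noteq> {}"
    and r: "\<And>i. i \<in> {1..2*D} \<Longrightarrow> (\<lambda>\<omega>. r \<omega> i) \<in> borel_measurable M"
    and c: "\<And>i. i \<in> {1..2*D} \<Longrightarrow> (\<lambda>\<omega>. c \<omega> i) \<in> borel_measurable M"
    and beta: "\<And>i. i \<in> {1..2*D} \<Longrightarrow> (\<lambda>\<omega>. beta \<omega> i) \<in> borel_measurable M"
  shows "(\<lambda>\<omega>. gcws D p ut (r \<omega>) (c \<omega>) (beta \<omega>)) \<in> measurable M (count_space UNIV)"
proof -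
  let ?K = "{i \<in> {1..2*D}. ut i > 0}"
  have arg: "(\<lambda>\<omega>. p * ln (ut i) / r \<omega> i + beta \<omega> i) \<in> borel_measurable M" if "i \<in> ?K" for i
  proof -
    have i: "i \<in> {1..2*D}"
      using that by simp
    show ?thesis
      using r[OF i] beta[OF i] by measurable
  qed
  have arg_min: "(\<lambda>\<omega>. arg_min_on (gcws_a p ut (r \<omega>) (c \<omega>) (beta \<omega>)) ?K) \<in> measurable M (count_space ?K)"
  proof (rule measurable_arg_min_on)
    fix i assume i: "i \<in> ?K"
    then have i': "i \<in> {1..2*D}"
      by simp
    from measurable_compose[OF arg[OF i] borel_measurable_real_floor]
    have "(\<lambda>\<omega>. real_of_int (gcws_t p ut (r \<omega>) (beta \<omega>) i)) \<in> borel_measurable M"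
      by (simp add: comp_def gcws_t_def)
    with r[OF i'] c[OF i'] beta[OF i']
    show "(\<lambda>\<omega>. gcws_a p ut (r \<omega>) (c \<omega>) (beta \<omega>) i) \<in> borel_measurable M"
      unfolding gcws_a_def by measurable
  qed (use support in auto)
  have pair: "(\<lambda>\<omega>. (i, gcws_t p ut (r \<omega>) (beta \<omega>) i)) \<in> measurable M (count_space UNIV)" if "i \<in> ?K" for i
  proof -
    from measurable_compose[OF arg[OF that] measurable_real_floor]
    have "(\<lambda>\<omega>. gcws_t p ut (r \<omega>) (beta \<omega>) i) \<in> measurable M (count_space UNIV)"
      by (simp add: comp_def gcws_t_def)
    then have "(\<lambda>\<omega>. (i, gcws_t p ut (r \<omega>) (beta \<omega>) i)) \<in> measurable M (count_space UNIV \<Otimes>\<^sub>M count_space UNIV)"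
      by measurable
    then show ?thesis
      by (simp add: pair_measure_countable)
  qed
  have "(\<lambda>\<omega>. (\<lambda>i. (i, gcws_t p ut (r \<omega>) (beta \<omega>) i)) (arg_min_on (gcws_a p ut (r \<omega>) (c \<omega>) (beta \<omega>)) ?K))
      \<in> measurable M (count_space UNIV)"
    by (rule measurable_compose_countable'[OF pair arg_min]) auto
  then show ?thesis
    unfolding gcws_def Let_def .
qed

definition gcws_block :: "nat \<Rightarrow> nat \<Rightarrow> rtag set" where
  "gcws_block D j = {R j i | i. i \<in> {1..2*D}} \<union> {C j i | i. i \<in> {1..2*D}} \<union> {Bt j i | i. i \<in> {1..2*D}} \<union>
     {G j i t | i t. i \<in> {1..2*D}}"

definition gcws_tags :: "nat \<Rightarrow> nat \<Rightarrow> rtag set" where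
  "gcws_tags D k = (\<Union>j\<in>{1..k}. gcws_block D j)"

fun to_block :: "nat \<Rightarrow> rtag \<Rightarrow> rtag" where
  "to_block j (R _ i) = R j i"
| "to_block j (C _ i) = C j i"
| "to_block j (Bt _ i) = Bt j i"
| "to_block j (G _ i t) = G j i t"
| "to_block j (H l) = H l"
| "to_block j (S l) = S l"

lemma gcws_block_memI:
  assumes "i \<in> {1..2*D}"
  shows "R j i \<in> gcws_block D j" "C j i \<in> gcws_block D j" "Bt j i \<in> gcws_block D j" "G j i t \<in> gcws_block D j"
  using assms by (auto simp: gcws_block_def)

lemma to_block_gcws_block: "t \<in> gcws_block D 1 \<Longrightarrow> to_block j t \<in> gcws_block D j"
  by (auto simp: gcws_block_def)

lemma inj_on_to_block: "inj_on (to_block j) (gcws_block D 1)"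
  by (auto simp: inj_on_def gcws_block_def)

definition hashed_gcws_val :: "nat \<Rightarrow> real \<Rightarrow> (nat \<Rightarrow> real) \<Rightarrow> nat \<Rightarrow> (rtag \<Rightarrow> real) \<Rightarrow> real" where
  "hashed_gcws_val D p u j w = hashed_gcws D p (\<lambda>t _. w t) u j ()"

lemma hashed_gcws_eq_val: "hashed_gcws D p X u j \<omega> = hashed_gcws_val D p u j (\<lambda>t. X t \<omega>)"
  by (simp add: hashed_gcws_val_def hashed_gcws_def)

lemma hashed_gcws_val_cong:
  assumes u: "\<exists>i\<in>{1..D}. u i \<noteq> 0"
    and agree: "\<And>i. i \<in> {1..2*D} \<Longrightarrow> w' (R j' i) = w (R j i) \<and> w' (C j' i) = w (C j i) \<and>
                   w' (Bt j' i) = w (Bt j i) \<and> (\<forall>t. w' (G j' i t) = w (G j i t))"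
  shows "hashed_gcws_val D p u j' w' = hashed_gcws_val D p u j w"
proof -
  note support = sign_split_support_nonempty[OF u]
  have gcws_eq: "gcws D p (sign_split u) (\<lambda>i. w' (R j' i)) (\<lambda>i. w' (C j' i)) (\<lambda>i. w' (Bt j' i)) =
      gcws D p (sign_split u) (\<lambda>i. w (R j i)) (\<lambda>i. w (C j i)) (\<lambda>i. w (Bt j i))"
    using agree by (intro gcws_cong[OF support]) auto
  obtain i t where it: "gcws D p (sign_split u) (\<lambda>i. w (R j i)) (\<lambda>i. w (C j i)) (\<lambda>i. w (Bt j i)) = (i, t)"
    by fastforce
  moreover have "i \<in> {1..2*D}"
    using fst_gcws_mem[OF support] it by (metis fst_conv)
  ultimately show ?thesis
    using agree by (simp add: hashed_gcws_val_def hashed_gcws_def gcws_eq)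
qed

lemma hashed_gcws_val_restrict:
  assumes "\<exists>i\<in>{1..D}. u i \<noteq> 0" "gcws_block D j \<subseteq> A"
  shows "hashed_gcws_val D p u j (restrict w A) = hashed_gcws_val D p u j w"
proof (rule hashed_gcws_val_cong[OF assms(1)])
  fix i assume "i \<in> {1..2*D}"
  then have "R j i \<in> A \<and> C j i \<in> A \<and> Bt j i \<in> A \<and> (\<forall>t. G j i t \<in> A)"
    using assms(2) gcws_block_memI by blast
  then show "restrict w A (R j i) = w (R j i) \<and> restrict w A (C j i) = w (C j i) \<and>
      restrict w A (Bt j i) = w (Bt j i) \<and> (\<forall>t. restrict w A (G j i t) = w (G j i t))"
    by simp
qed

lemma hashed_gcws_val_to_block:
  assumes "\<exists>i\<in>{1..D}. u i \<noteq> 0"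
  shows "hashed_gcws_val D p u j w = hashed_gcws_val D p u 1 (\<lambda>t\<in>gcws_block D 1. w (to_block j t))"
  by (rule hashed_gcws_val_cong[OF assms, symmetric]) (simp add: gcws_block_memI)

lemma measurable_hashed_gcws_val [measurable]:
  assumes "\<exists>i\<in>{1..D}. u i \<noteq> 0"
  shows "hashed_gcws_val D p u j \<in> borel_measurable (PiM A (\<lambda>_. borel))"
proof -
  have "(\<lambda>w. gcws D p (sign_split u) (\<lambda>i. w (R j i)) (\<lambda>i. w (C j i)) (\<lambda>i. w (Bt j i)))
      \<in> measurable (PiM A (\<lambda>_. borel)) (count_space UNIV)"
    by (intro measurable_gcws sign_split_support_nonempty[OF assms]) auto
  then have "(\<lambda>w. (\<lambda>q. w (G j (fst q) (snd q)))
      (gcws D p (sign_split u) (\<lambda>i. w (R j i)) (\<lambda>i. w (C j i)) (\<lambda>i. w (Bt j i)))) \<in> borel_measurable (PiM A (\<lambda>_. borel))"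
    by (rule measurable_compose_countable[rotated]) auto
  then show ?thesis
    by (simp add: hashed_gcws_val_def[abs_def] hashed_gcws_def split_def Let_def)
qed

lemma pred_hashed_gcws_val_eq:
  assumes "\<exists>i\<in>{1..D}. u i \<noteq> 0"
  shows "Measurable.pred (PiM A (\<lambda>_. borel)) (\<lambda>w. hashed_gcws_val D p u j w = c)"
proof -
  have "{w \<in> space (PiM A (\<lambda>_. borel)). hashed_gcws_val D p u j w = c} =
      hashed_gcws_val D p u j -` {c} \<inter> space (PiM A (\<lambda>_. borel))"
    by auto
  then show ?thesis
    unfolding pred_def using measurable_sets[OF measurable_hashed_gcws_val[OF assms], of "{c}"] by simp
qed

lemma inner_onehot_concat:
  "(\<Sum>l\<in>{1..2^b * k}. onehot_concat b h1 l * onehot_concat b h2 l) =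
   real (card {j\<in>{1..k}. h1 j = h2 j \<and> h1 j \<in> real ` {..<2^b}})"
proof -
  have "(\<Sum>l\<in>{1..2^b * k}. onehot_concat b h1 l * onehot_concat b h2 l) =
      (\<Sum>j\<in>{1..k}. \<Sum>r<2^b. (if h1 j = real r then 1 else 0) * (if h2 j = real r then 1 else 0))"
    unfolding onehot_concat_def by (rule sum_div_mod_blocks) simp
  also have "\<dots> = (\<Sum>j\<in>{1..k}. if h1 j = h2 j \<and> h1 j \<in> real ` {..<2^b} then 1 else 0)"
  proof (intro sum.cong refl)
    fix j
    show "(\<Sum>r<2^b. (if h1 j = real r then 1 else 0) * (if h2 j = real r then 1 else 0)) =
        (if h1 j = h2 j \<and> h1 j \<in> real ` {..<2^b} then 1 else (0::real))"
    proof (cases "h1 j \<in> real ` {..<2^b}")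
      case True
      then obtain r0 where "r0 < 2^b" "h1 j = real r0"
        by auto
      then have "(\<Sum>r<2^b. (if h1 j = real r then 1 else 0) * (if h2 j = real r then 1 else 0)) =
          (\<Sum>r<2^b. if r = r0 then (if h2 j = h1 j then 1 else 0) else (0::real))"
        by (intro sum.cong) auto
      then show ?thesis
        using True \<open>r0 < 2^b\<close> by auto
    qed (auto intro!: sum.neutral)
  qed
  also have "\<dots> = real (card {j\<in>{1..k}. h1 j = h2 j \<and> h1 j \<in> real ` {..<2^b}})"
    by (simp add: sum.If_cases Int_def)
  finally show ?thesis .
qed

lemma onehot_concat_square: "(onehot_concat b h l)\<^sup>2 = onehot_concat b h l"
  by (simp add: onehot_concat_def)

lemma abs_onehot_concat_le: "\<bar>onehot_concat b h l\<bar> \<le> 1"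
  by (simp add: onehot_concat_def)

lemma onehot_concat_cong:
  assumes "l \<in> {1..2^b * k}" "\<And>j. j \<in> {1..k} \<Longrightarrow> h j = h' j"
  shows "onehot_concat b h l = onehot_concat b h' l"
proof -
  have "(l - 1) div 2^b < k"
    using assms(1) by (auto simp: div_less_iff_less_mult mult.commute)
  then show ?thesis
    using assms(2) by (simp add: onehot_concat_def)
qed

section \<open>Hashed GCWS sketch\<close>

lemma gcws_tags_subset_rtags: "gcws_tags D k \<subseteq> rtags D k d"
  by (auto simp: gcws_tags_def gcws_block_def rtags_def)

lemma gcws_block_subset_rtags: "j \<in> {1..k} \<Longrightarrow> gcws_block D j \<subseteq> rtags D k d"
  by (auto simp: gcws_block_def rtags_def)

lemma sketch_tags_subset_rtags: "sketch_tags d \<subseteq> rtags D k d"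
  by (auto simp: sketch_tags_def rtags_def)

lemma gcws_tags_sketch_tags_disjoint: "gcws_tags D k \<inter> sketch_tags d = {}"
  by (auto simp: gcws_tags_def gcws_block_def sketch_tags_def)

locale hashed_gcws_sketch = count_sketch_model M X "rtags D k d" d B
  for M :: "'a measure" and X D k d B +
  fixes b :: nat and p :: real and u v :: "nat \<Rightarrow> real"
  assumes d_eq: "d = 2^b * k" and k_pos: "k \<ge> 1"
    and u_nonzero: "\<exists>i\<in>{1..D}. u i \<noteq> 0" and v_nonzero: "\<exists>i\<in>{1..D}. v i \<noteq> 0"
    and distR: "\<And>j i. j \<in> {1..k} \<Longrightarrow> i \<in> {1..2*D} \<Longrightarrow>
                  distributed M lborel (X (R j i)) (erlang_density 1 1)"
    and distC: "\<And>j i. j \<in> {1..k} \<Longrightarrow> i \<in> {1..2*D} \<Longrightarrow>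
                  distributed M lborel (X (C j i)) (erlang_density 1 1)"
    and distB: "\<And>j i. j \<in> {1..k} \<Longrightarrow> i \<in> {1..2*D} \<Longrightarrow>
                  distr M lborel (X (Bt j i)) = uniform_measure lborel {0..1}"
    and distG: "\<And>j i t n. j \<in> {1..k} \<Longrightarrow> i \<in> {1..2*D} \<Longrightarrow> n < 2^b \<Longrightarrow>
                  prob {\<omega> \<in> space M. X (G j i t) \<omega> = real n} = 1 / 2^b"
begin

abbreviation gcws_vals :: "'a \<Rightarrow> rtag \<Rightarrow> real" where
  "gcws_vals \<equiv> tags_on (gcws_tags D k)"

lemma hashed_gcws_eq_gcws_vals:
  assumes "\<exists>i\<in>{1..D}. w i \<noteq> 0" "j \<in> {1..k}"
  shows "hashed_gcws D p X w j \<omega> = hashed_gcws_val D p w j (gcws_vals \<omega>)"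
proof -
  have "gcws_block D j \<subseteq> gcws_tags D k"
    using assms(2) by (auto simp: gcws_tags_def)
  then show ?thesis
    using assms(1) by (simp add: hashed_gcws_eq_val hashed_gcws_val_restrict)
qed

lemma AE_G_range:
  assumes "j \<in> {1..k}" "i \<in> {1..2*D}"
  shows "AE \<omega> in M. X (G j i t) \<omega> \<in> real ` {..<2^b}"
proof (rule AE_in_finite)
  show "random_variable borel (X (G j i t))"
    using assms by (intro random_variable_X) (auto simp: rtags_def)
  show "(\<Sum>a\<in>real ` {..<2^b}. prob {\<omega>\<in>space M. X (G j i t) \<omega> = a}) = 1"
    using distG[OF assms] by (subst sum.reindex) (auto simp: inj_on_def)
qed simp

lemma AE_hashed_gcws_range:
  assumes w: "\<exists>i\<in>{1..D}. w i \<noteq> 0"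
  shows "AE \<omega> in M. \<forall>j\<in>{1..k}. hashed_gcws D p X w j \<omega> \<in> real ` {..<2^b}"
proof -
  have "AE \<omega> in M. \<forall>(j, i, t)\<in>{1..k} \<times> {1..2*D} \<times> UNIV. X (G j i t) \<omega> \<in> real ` {..<2^b}"
    by (rule AE_ball_countable') (auto intro: AE_G_range)
  then show ?thesis
  proof eventually_elim
    case (elim \<omega>)
    show ?case
    proof
      fix j assume j: "j \<in> {1..k}"
      obtain i t where it: "gcws D p (sign_split w) (\<lambda>i. X (R j i) \<omega>) (\<lambda>i. X (C j i) \<omega>) (\<lambda>i. X (Bt j i) \<omega>) = (i, t)"
        by fastforce
      then have "i \<in> {1..2*D}"
        using fst_gcws_mem[OF sign_split_support_nonempty[OF w]] by (metis fst_conv)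
      then show "hashed_gcws D p X w j \<omega> \<in> real ` {..<2^b}"
        using elim j it by (auto simp: hashed_gcws_def)
    qed
  qed
qed

lemma distr_X_to_block:
  assumes t: "t \<in> gcws_block D 1" and j: "j \<in> {1..k}"
  shows "distr M borel (X (to_block j t)) = distr M borel (X t)"
proof -
  have one: "1 \<in> {1..k}"
    using k_pos by simp
  have lborel: "distr M borel Y = distr M lborel Y" for Y :: "'a \<Rightarrow> real"
    by (simp add: distr_def)
  from t consider (R) i where "i \<in> {1..2*D}" "t = R 1 i" | (C) i where "i \<in> {1..2*D}" "t = C 1 i"
    | (Bt) i where "i \<in> {1..2*D}" "t = Bt 1 i" | (G) i s where "i \<in> {1..2*D}" "t = G 1 i s"
    unfolding gcws_block_def by blast
  then show ?thesis
  proof cases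
    case R
    then show ?thesis
      unfolding lborel using distributed_distr_eq_density[OF distR[OF j R(1)]]
        distributed_distr_eq_density[OF distR[OF one R(1)]] by simp
  next
    case C
    then show ?thesis
      unfolding lborel using distributed_distr_eq_density[OF distC[OF j C(1)]]
        distributed_distr_eq_density[OF distC[OF one C(1)]] by simp
  next
    case Bt
    then show ?thesis
      unfolding lborel using distB[OF j Bt(1)] distB[OF one Bt(1)] by simp
  next
    case G
    have "distr M borel (X (G j i s)) = distr M borel (X (G 1 i s))"
    proof (rule distr_eq_if_finite_support[where F = "real ` {..<2^b}"])
      show "random_variable borel (X (G j i s))" "random_variable borel (X (G 1 i s))"
        using G(1) j one by (auto intro!: random_variable_X simp: rtags_def)
    qed (use G(1) j one distG AE_G_range in auto)
    then show ?thesis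
      using G by simp
  qed
qed

lemma distr_block_view:
  assumes j: "j \<in> {1..k}"
  shows "distr M (PiM (gcws_block D 1) (\<lambda>_. borel)) (\<lambda>\<omega>. \<lambda>t\<in>gcws_block D 1. X (to_block j t) \<omega>) =
         PiM (gcws_block D 1) (\<lambda>t. distr M borel (X t))"
proof -
  obtain i where "i \<in> {1..D}"
    using u_nonzero by blast
  then have "R 1 i \<in> gcws_block D 1"
    by (intro gcws_block_memI) auto
  moreover have "to_block j ` gcws_block D 1 \<subseteq> rtags D k d"
    using j to_block_gcws_block gcws_tags_subset_rtags unfolding gcws_tags_def by blast
  ultimately have "distr M (PiM (gcws_block D 1) (\<lambda>_. borel)) (\<lambda>\<omega>. \<lambda>t\<in>gcws_block D 1. X (to_block j t) \<omega>) =
      PiM (gcws_block D 1) (\<lambda>t. distr M borel (X (to_block j t)))"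
    by (intro distr_reindex_indep_vars[OF indep inj_on_to_block]) auto
  also have "\<dots> = PiM (gcws_block D 1) (\<lambda>t. distr M borel (X t))"
    using distr_X_to_block[OF _ j] by (intro PiM_cong) auto
  finally show ?thesis .
qed

definition match_prob :: real where
  "match_prob = prob {\<omega>\<in>space M. hashed_gcws D p X u 1 \<omega> = hashed_gcws D p X v 1 \<omega>}"

lemma prob_match:
  assumes j: "j \<in> {1..k}"
  shows "prob {\<omega>\<in>space M. hashed_gcws D p X u j \<omega> = hashed_gcws D p X v j \<omega>} = match_prob"
proof -
  let ?P = "PiM (gcws_block D 1) (\<lambda>_. borel :: real measure)"
  let ?Q = "{w \<in> space ?P. hashed_gcws_val D p u 1 w = hashed_gcws_val D p v 1 w}"
  let ?view = "\<lambda>j \<omega>. \<lambda>t\<in>gcws_block D 1. X (to_block j t) \<omega>"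
  have Q: "?Q \<in> sets ?P"
    using u_nonzero v_nonzero by measurable
  have prob_eq: "prob {\<omega>\<in>space M. hashed_gcws D p X u j \<omega> = hashed_gcws D p X v j \<omega>} =
      measure (PiM (gcws_block D 1) (\<lambda>t. distr M borel (X t))) ?Q" if j: "j \<in> {1..k}" for j
  proof -
    have view: "?view j \<in> measurable M ?P"
      using j to_block_gcws_block gcws_block_subset_rtags
      by (intro measurable_restrict random_variable_X) blast
    have "hashed_gcws D p X w j \<omega> = hashed_gcws_val D p w 1 (?view j \<omega>)" if "\<exists>i\<in>{1..D}. w i \<noteq> 0" for w \<omega>
      by (simp only: hashed_gcws_eq_val hashed_gcws_val_to_block[OF that, where j = j])
    then have "{\<omega>\<in>space M. hashed_gcws D p X u j \<omega> = hashed_gcws D p X v j \<omega>} = ?view j -` ?Q \<inter> space M"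
      using measurable_space[OF view] u_nonzero v_nonzero by auto
    then show ?thesis
      using measure_distr[OF view Q] distr_block_view[OF j] by simp
  qed
  show ?thesis
    unfolding match_prob_def prob_eq[OF j] using k_pos by (simp add: prob_eq)
qed

lemma indep_matches:
  "indep_vars (\<lambda>_. count_space UNIV) (\<lambda>j \<omega>. hashed_gcws D p X u j \<omega> = hashed_gcws D p X v j \<omega>) {1..k}"
proof -
  have "indep_vars (\<lambda>j. PiM (gcws_block D j) (\<lambda>_. borel)) (\<lambda>j \<omega>. tags_on (gcws_block D j) \<omega>) {1..k}"
    by (rule indep_vars_restrict[OF indep])
       (auto simp: disjoint_family_on_def gcws_block_def rtags_def)
  moreover have "(\<lambda>w. hashed_gcws_val D p u j w = hashed_gcws_val D p v j w)
      \<in> measurable (PiM (gcws_block D j) (\<lambda>_. borel)) (count_space UNIV)" for j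
    unfolding pred_def
    by (rule measurable_equality_set[OF measurable_hashed_gcws_val[OF u_nonzero] measurable_hashed_gcws_val[OF v_nonzero]])
  ultimately have "indep_vars (\<lambda>_. count_space UNIV) (\<lambda>j \<omega>.
      hashed_gcws_val D p u j (tags_on (gcws_block D j) \<omega>) = hashed_gcws_val D p v j (tags_on (gcws_block D j) \<omega>)) {1..k}"
    by (rule indep_vars_compose2)
  then show ?thesis
    by (rule indep_vars_cong[THEN iffD1, rotated -1])
       (auto simp: fun_eq_iff hashed_gcws_eq_val hashed_gcws_val_restrict[OF u_nonzero subset_refl]
         hashed_gcws_val_restrict[OF v_nonzero subset_refl])
qed

definition match_count :: "'a \<Rightarrow> nat" where
  "match_count \<omega> = card {j\<in>{1..k}. hashed_gcws D p X u j \<omega> = hashed_gcws D p X v j \<omega>}"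

lemma match_count_binomial: "prob {\<omega>\<in>space M. match_count \<omega> = n} = pmf (binomial_pmf k match_prob) n"
  using card_indep_events_binomial[OF indep_matches _ _ prob_match, of n] k_pos by (simp add: match_count_def)

lemma expectation_match_count:
  "expectation (\<lambda>\<omega>. real (match_count \<omega>)) = k * match_prob"
  "expectation (\<lambda>\<omega>. (real (match_count \<omega>))\<^sup>2) = k * match_prob + (real k ^ 2 - k) * match_prob ^ 2"
  using expectation_card_indep_events[OF indep_matches _ prob_match] by (simp_all add: match_count_def)

abbreviation onehot_hash :: "(nat \<Rightarrow> real) \<Rightarrow> (rtag \<Rightarrow> real) \<Rightarrow> nat \<Rightarrow> real" where
  "onehot_hash w tv \<equiv> onehot_concat b (\<lambda>j. hashed_gcws_val D p w j tv)"

definition sketch_estimate :: "'a \<Rightarrow> real" where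
  "sketch_estimate \<omega> = sketch_inner \<omega> (onehot_concat b (\<lambda>j. hashed_gcws D p X u j \<omega>))
                                      (onehot_concat b (\<lambda>j. hashed_gcws D p X v j \<omega>))"

lemma sketch_estimate_eq: "sketch_estimate \<omega> = sketch_inner \<omega> (onehot_hash u (gcws_vals \<omega>)) (onehot_hash v (gcws_vals \<omega>))"
  unfolding sketch_estimate_def
  by (intro sketch_inner_cong onehot_concat_cong[where k = k])
     (simp_all add: d_eq hashed_gcws_eq_gcws_vals[OF u_nonzero] hashed_gcws_eq_gcws_vals[OF v_nonzero])

lemma measurable_onehot_hash [measurable]:
  assumes "\<exists>i\<in>{1..D}. w i \<noteq> 0"
  shows "(\<lambda>tv. onehot_hash w tv l) \<in> borel_measurable (PiM (gcws_tags D k) (\<lambda>_. borel))"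
  unfolding onehot_concat_def using measurable_hashed_gcws_val[OF assms] by measurable

lemma measurable_sketch_estimate [measurable]: "sketch_estimate \<in> borel_measurable M"
proof -
  have "(\<lambda>\<omega>. onehot_hash w (gcws_vals \<omega>) l) \<in> borel_measurable M" if "\<exists>i\<in>{1..D}. w i \<noteq> 0" for w l
    using measurable_compose[OF measurable_tags_on[OF gcws_tags_subset_rtags] measurable_onehot_hash[OF that]]
    by (simp add: comp_def)
  then show ?thesis
    unfolding sketch_estimate_eq[abs_def] using u_nonzero v_nonzero by measurable
qed

lemma match_count_eq:
  "match_count \<omega> = card {j\<in>{1..k}. hashed_gcws_val D p u j (gcws_vals \<omega>) = hashed_gcws_val D p v j (gcws_vals \<omega>)}"
  unfolding match_count_def
  by (intro arg_cong[where f = card]) (auto simp: hashed_gcws_eq_gcws_vals[OF u_nonzero] hashed_gcws_eq_gcws_vals[OF v_nonzero])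

lemma measurable_match_count [measurable]: "(\<lambda>\<omega>. real (match_count \<omega>)) \<in> borel_measurable M"
proof -
  have hash: "(\<lambda>\<omega>. hashed_gcws_val D p w j (gcws_vals \<omega>)) \<in> borel_measurable M" if "\<exists>i\<in>{1..D}. w i \<noteq> 0" for w j
    using measurable_compose[OF measurable_tags_on[OF gcws_tags_subset_rtags] measurable_hashed_gcws_val[OF that]]
    by (simp add: comp_def)
  have "(\<lambda>\<omega>. real (match_count \<omega>)) = (\<lambda>\<omega>. \<Sum>j\<in>{1..k}.
      if hashed_gcws_val D p u j (gcws_vals \<omega>) = hashed_gcws_val D p v j (gcws_vals \<omega>) then 1 else 0)"
    by (simp add: fun_eq_iff match_count_eq sum.If_cases Int_def)
  then show ?thesis
    using hash[OF u_nonzero] hash[OF v_nonzero] by simp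
qed

lemma AE_onehot_hash_sums:
  "AE \<omega> in M. (\<Sum>l\<in>{1..d}. onehot_hash u (gcws_vals \<omega>) l * onehot_hash v (gcws_vals \<omega>) l) = match_count \<omega> \<and>
              (\<Sum>l\<in>{1..d}. onehot_hash u (gcws_vals \<omega>) l) = k \<and> (\<Sum>l\<in>{1..d}. onehot_hash v (gcws_vals \<omega>) l) = k"
  using AE_hashed_gcws_range[OF u_nonzero] AE_hashed_gcws_range[OF v_nonzero]
proof eventually_elim
  case (elim \<omega>)
  let ?hu = "\<lambda>j. hashed_gcws_val D p u j (gcws_vals \<omega>)" and ?hv = "\<lambda>j. hashed_gcws_val D p v j (gcws_vals \<omega>)"
  have range: "?hu j \<in> real ` {..<2^b}" "?hv j \<in> real ` {..<2^b}" if "j \<in> {1..k}" for j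
    using elim that by (simp_all add: hashed_gcws_eq_gcws_vals[OF u_nonzero] hashed_gcws_eq_gcws_vals[OF v_nonzero])
  have inner: "(\<Sum>l\<in>{1..d}. onehot_hash w (gcws_vals \<omega>) l * onehot_hash w' (gcws_vals \<omega>) l) =
      real (card {j\<in>{1..k}. hashed_gcws_val D p w j (gcws_vals \<omega>) = hashed_gcws_val D p w' j (gcws_vals \<omega>) \<and>
                            hashed_gcws_val D p w j (gcws_vals \<omega>) \<in> real ` {..<2^b}})" for w w'
    unfolding d_eq by (rule inner_onehot_concat)
  have "{j\<in>{1..k}. ?hu j = ?hv j \<and> ?hu j \<in> real ` {..<2^b}} = {j\<in>{1..k}. ?hu j = ?hv j}"
    "{j\<in>{1..k}. ?hu j = ?hu j \<and> ?hu j \<in> real ` {..<2^b}} = {1..k}"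
    "{j\<in>{1..k}. ?hv j = ?hv j \<and> ?hv j \<in> real ` {..<2^b}} = {1..k}"
    using range by auto
  then show ?case
    using inner[of u v] inner[of u u] inner[of v v]
    by (simp add: match_count_eq onehot_concat_square[unfolded power2_eq_square])
qed

lemma sketch_moments_given_gcws:
  fixes \<phi> :: "(rtag \<Rightarrow> real) \<Rightarrow> real"
  assumes \<phi>: "\<phi> \<in> borel_measurable (PiM (gcws_tags D k) (\<lambda>_. borel))" "\<And>w. \<bar>\<phi> w\<bar> \<le> 1"
  shows "expectation (\<lambda>\<omega>. \<phi> (gcws_vals \<omega>) * sketch_estimate \<omega>) =
         expectation (\<lambda>\<omega>. \<phi> (gcws_vals \<omega>) * match_count \<omega>)"
    and "expectation (\<lambda>\<omega>. \<phi> (gcws_vals \<omega>) * (sketch_estimate \<omega>)\<^sup>2) =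
         expectation (\<lambda>\<omega>. \<phi> (gcws_vals \<omega>) * (real (match_count \<omega>) ^ 2 + (real k ^ 2 + real (match_count \<omega>) ^ 2 - 2 * real (match_count \<omega>)) / B))"
proof -
  note hyps = gcws_tags_subset_rtags gcws_tags_sketch_tags_disjoint \<phi>
    measurable_onehot_hash[OF u_nonzero] abs_onehot_concat_le measurable_onehot_hash[OF v_nonzero] abs_onehot_concat_le
  have [measurable]: "(\<lambda>\<omega>. \<phi> (gcws_vals \<omega>)) \<in> borel_measurable M"
    using measurable_compose[OF measurable_tags_on[OF gcws_tags_subset_rtags] \<phi>(1)] by (simp add: comp_def)
  have onehot: "(\<lambda>\<omega>. onehot_hash w (gcws_vals \<omega>) l) \<in> borel_measurable M" if "\<exists>i\<in>{1..D}. w i \<noteq> 0" for w l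
    using measurable_compose[OF measurable_tags_on[OF gcws_tags_subset_rtags] measurable_onehot_hash[OF that]]
    by (simp add: comp_def)
  note [measurable] = onehot[OF u_nonzero] onehot[OF v_nonzero]
  show "expectation (\<lambda>\<omega>. \<phi> (gcws_vals \<omega>) * sketch_estimate \<omega>) =
        expectation (\<lambda>\<omega>. \<phi> (gcws_vals \<omega>) * match_count \<omega>)"
    unfolding sketch_estimate_eq sketch_first_moment[OF hyps]
  proof (rule integral_cong_AE)
    show "AE \<omega> in M. \<phi> (gcws_vals \<omega>) * (\<Sum>l\<in>{1..d}. onehot_hash u (gcws_vals \<omega>) l * onehot_hash v (gcws_vals \<omega>) l) =
        \<phi> (gcws_vals \<omega>) * match_count \<omega>"
      using AE_onehot_hash_sums by eventually_elim simp
    show "(\<lambda>\<omega>. \<phi> (gcws_vals \<omega>) * (\<Sum>l\<in>{1..d}. onehot_hash u (gcws_vals \<omega>) l * onehot_hash v (gcws_vals \<omega>) l))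
        \<in> borel_measurable M"
      by measurable
  qed measurable
  show "expectation (\<lambda>\<omega>. \<phi> (gcws_vals \<omega>) * (sketch_estimate \<omega>)\<^sup>2) =
        expectation (\<lambda>\<omega>. \<phi> (gcws_vals \<omega>) * (real (match_count \<omega>) ^ 2 + (real k ^ 2 + real (match_count \<omega>) ^ 2 - 2 * real (match_count \<omega>)) / B))"
    unfolding sketch_estimate_eq sketch_second_moment[OF hyps]
  proof (rule integral_cong_AE)
    show "AE \<omega> in M. \<phi> (gcws_vals \<omega>) * ((\<Sum>l\<in>{1..d}. onehot_hash u (gcws_vals \<omega>) l * onehot_hash v (gcws_vals \<omega>) l)\<^sup>2 +
          count_sketch_variance B d (onehot_hash u (gcws_vals \<omega>)) (onehot_hash v (gcws_vals \<omega>))) =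
        \<phi> (gcws_vals \<omega>) * (real (match_count \<omega>) ^ 2 + (real k ^ 2 + real (match_count \<omega>) ^ 2 - 2 * real (match_count \<omega>)) / B)"
      using AE_onehot_hash_sums
      by eventually_elim (simp add: count_sketch_variance_def onehot_concat_square power2_eq_square[of "real k"])
    show "(\<lambda>\<omega>. \<phi> (gcws_vals \<omega>) * ((\<Sum>l\<in>{1..d}. onehot_hash u (gcws_vals \<omega>) l * onehot_hash v (gcws_vals \<omega>) l)\<^sup>2 +
          count_sketch_variance B d (onehot_hash u (gcws_vals \<omega>)) (onehot_hash v (gcws_vals \<omega>)))) \<in> borel_measurable M"
      unfolding count_sketch_variance_def by measurable
  qed measurable
qed

lemma match_count_le: "match_count \<omega> \<le> k"
  unfolding match_count_def by (rule order_trans[OF card_mono[of "{1..k}"]]) auto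

lemma AE_abs_sketch_estimate_le: "AE \<omega> in M. \<bar>sketch_estimate \<omega>\<bar> \<le> (real d)\<^sup>2"
  using AE_abs_sketch_inner_le[of 1] by eventually_elim (simp add: sketch_estimate_def abs_onehot_concat_le)

lemma expectation_sketch_estimate: "expectation sketch_estimate = k * match_prob"
  using sketch_moments_given_gcws(1)[of "\<lambda>_. 1"] expectation_match_count(1) by simp

lemma variance_sketch_estimate:
  "variance sketch_estimate =
     (real k ^ 2 + real k ^ 2 * match_prob ^ 2 - real k * match_prob ^ 2 - real k * match_prob) / B +
     real k * match_prob * (1 - match_prob)"
proof -
  let ?a = "\<lambda>\<omega>. real (match_count \<omega>)"
  have "integrable M ?a"
    using match_count_le by (intro integrable_const_bound[where B = "real k"]) auto
  moreover have "integrable M (\<lambda>\<omega>. (?a \<omega>)\<^sup>2)"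
    using match_count_le by (intro integrable_const_bound[where B = "(real k)\<^sup>2"]) (auto intro!: power_mono)
  ultimately have int: "integrable M ?a" "integrable M (\<lambda>\<omega>. (?a \<omega>)\<^sup>2)" .
  have "expectation (\<lambda>\<omega>. (sketch_estimate \<omega>)\<^sup>2) =
      expectation (\<lambda>\<omega>. (1 + 1 / B) * (?a \<omega>)\<^sup>2 - 2 / B * ?a \<omega> + real k ^ 2 / B)"
    using sketch_moments_given_gcws(2)[of "\<lambda>_. 1"] by (simp add: add_divide_distrib diff_divide_distrib algebra_simps)
  also have "\<dots> = (1 + 1 / B) * expectation (\<lambda>\<omega>. (?a \<omega>)\<^sup>2) - 2 / B * expectation ?a + real k ^ 2 / B"
    using int by (simp add: prob_space)
  finally have second_moment: "expectation (\<lambda>\<omega>. (sketch_estimate \<omega>)\<^sup>2) =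
      (1 + 1 / B) * (k * match_prob + (real k ^ 2 - k) * match_prob ^ 2) - 2 / B * (k * match_prob) + real k ^ 2 / B"
    by (simp only: expectation_match_count)
  have "variance sketch_estimate = expectation (\<lambda>\<omega>. (sketch_estimate \<omega>)\<^sup>2) - (expectation sketch_estimate)\<^sup>2"
    by (rule variance_eq_bounded[OF measurable_sketch_estimate AE_abs_sketch_estimate_le])
  also have "\<dots> = (1 + 1 / B) * (k * match_prob + (real k ^ 2 - k) * match_prob ^ 2) - 2 / B * (k * match_prob) +
      real k ^ 2 / B - (k * match_prob)\<^sup>2"
    by (simp only: second_moment expectation_sketch_estimate)
  also have "\<dots> = (real k ^ 2 + real k ^ 2 * match_prob ^ 2 - real k * match_prob ^ 2 - real k * match_prob) / B +
      real k * match_prob * (1 - match_prob)"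
    using B_pos by (simp add: field_simps power2_eq_square)
  finally show ?thesis .
qed

lemma expectation_estimator: "expectation (\<lambda>\<omega>. sketch_estimate \<omega> / k) = match_prob"
  using expectation_sketch_estimate k_pos by simp

lemma variance_estimator:
  "variance (\<lambda>\<omega>. sketch_estimate \<omega> / k) =
     match_prob * (1 - match_prob) / k + (1 + match_prob ^ 2 - match_prob ^ 2 / k - match_prob / k) / B"
proof -
  have "variance (\<lambda>\<omega>. sketch_estimate \<omega> / k) = variance sketch_estimate / (real k)\<^sup>2"
    by (rule variance_divide)
  also have "\<dots> = match_prob * (1 - match_prob) / k + (1 + match_prob ^ 2 - match_prob ^ 2 / k - match_prob / k) / B"
    unfolding variance_sketch_estimate using k_pos B_pos by (simp add: field_simps power2_eq_square)
  finally show ?thesis .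
qed

lemma moments_on_hashed_pattern:
  fixes \<alpha> \<beta> :: "nat \<Rightarrow> real"
  defines "E \<equiv> {\<omega> \<in> space M. \<forall>j\<in>{1..k}. hashed_gcws D p X u j \<omega> = \<alpha> j \<and> hashed_gcws D p X v j \<omega> = \<beta> j}"
  defines "a \<equiv> real (card {j\<in>{1..k}. \<alpha> j = \<beta> j})"
  shows "E \<in> events"
    and "expectation (\<lambda>\<omega>. indicator E \<omega> * sketch_estimate \<omega>) = a * prob E"
    and "expectation (\<lambda>\<omega>. indicator E \<omega> * (sketch_estimate \<omega>)\<^sup>2) = (a\<^sup>2 + (real k ^ 2 + a\<^sup>2 - 2 * a) / B) * prob E"
proof -
  define \<phi> where "\<phi> w = (if \<forall>j\<in>{1..k}. hashed_gcws_val D p u j w = \<alpha> j \<and> hashed_gcws_val D p v j w = \<beta> j then 1 else 0 :: real)"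
    for w
  have \<phi>: "\<phi> \<in> borel_measurable (PiM (gcws_tags D k) (\<lambda>_. borel))" "\<And>w. \<bar>\<phi> w\<bar> \<le> 1"
    unfolding \<phi>_def using pred_hashed_gcws_val_eq[OF u_nonzero] pred_hashed_gcws_val_eq[OF v_nonzero] by simp_all
  have \<phi>_E: "\<phi> (gcws_vals \<omega>) = indicator E \<omega>" if "\<omega> \<in> space M" for \<omega>
    using that by (auto simp: \<phi>_def E_def hashed_gcws_eq_gcws_vals[OF u_nonzero] hashed_gcws_eq_gcws_vals[OF v_nonzero])
  have [measurable]: "(\<lambda>\<omega>. \<phi> (gcws_vals \<omega>)) \<in> borel_measurable M"
    using measurable_compose[OF measurable_tags_on[OF gcws_tags_subset_rtags] \<phi>(1)] by (simp add: comp_def)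
  have "E = {\<omega> \<in> space M. \<phi> (gcws_vals \<omega>) = 1}"
    using \<phi>_E by (auto simp: E_def indicator_def)
  then show E: "E \<in> events"
    by simp
  have count_E: "real (match_count \<omega>) = a" if "\<omega> \<in> E" for \<omega>
    using that unfolding match_count_def a_def E_def by (auto intro!: arg_cong[where f = card])
  have weighted: "expectation (\<lambda>\<omega>. indicator E \<omega> * f \<omega>) = expectation (\<lambda>\<omega>. \<phi> (gcws_vals \<omega>) * f \<omega>)" for f
    by (intro Bochner_Integration.integral_cong) (simp_all add: \<phi>_E)
  have on_E: "expectation (\<lambda>\<omega>. \<phi> (gcws_vals \<omega>) * g (real (match_count \<omega>))) = g a * prob E" for g
  proof -
    have "expectation (\<lambda>\<omega>. \<phi> (gcws_vals \<omega>) * g (real (match_count \<omega>))) = expectation (\<lambda>\<omega>. g a * indicator E \<omega>)"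
      by (intro Bochner_Integration.integral_cong) (auto simp: \<phi>_E count_E indicator_def)
    then show ?thesis
      using E by (simp add: emeasure_eq_measure)
  qed
  show "expectation (\<lambda>\<omega>. indicator E \<omega> * sketch_estimate \<omega>) = a * prob E"
    using weighted sketch_moments_given_gcws(1)[OF \<phi>] on_E[of "\<lambda>x. x"] by simp
  show "expectation (\<lambda>\<omega>. indicator E \<omega> * (sketch_estimate \<omega>)\<^sup>2) = (a\<^sup>2 + (real k ^ 2 + a\<^sup>2 - 2 * a) / B) * prob E"
    using weighted sketch_moments_given_gcws(2)[OF \<phi>] on_E[of "\<lambda>x. x\<^sup>2 + (real k ^ 2 + x\<^sup>2 - 2 * x) / B"] by simp
qed

lemma conditional_sketch_moments:
  fixes \<alpha> \<beta> :: "nat \<Rightarrow> real"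
  defines "E \<equiv> {\<omega> \<in> space M. \<forall>j\<in>{1..k}. hashed_gcws D p X u j \<omega> = \<alpha> j \<and> hashed_gcws D p X v j \<omega> = \<beta> j}"
  defines "a \<equiv> real (card {j\<in>{1..k}. \<alpha> j = \<beta> j})"
  assumes pos: "prob E > 0"
  shows "integral\<^sup>L (uniform_measure M E) sketch_estimate = a"
    and "integral\<^sup>L (uniform_measure M E) (\<lambda>\<omega>. (sketch_estimate \<omega> - integral\<^sup>L (uniform_measure M E) sketch_estimate)\<^sup>2) =
         (real k ^ 2 + a ^ 2 - 2 * a) / B"
proof -
  note moments = moments_on_hashed_pattern[of \<alpha> \<beta>, folded E_def a_def]
  interpret N: prob_space "uniform_measure M E"
    using moments(1) pos by (intro prob_space_uniform_measure) (auto simp: emeasure_eq_measure)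
  have first: "integral\<^sup>L (uniform_measure M E) sketch_estimate = a"
    using integral_uniform_measure[OF moments(1) pos measurable_sketch_estimate] moments(2) pos by simp
  have second: "integral\<^sup>L (uniform_measure M E) (\<lambda>\<omega>. (sketch_estimate \<omega>)\<^sup>2) = a\<^sup>2 + (real k ^ 2 + a\<^sup>2 - 2 * a) / B"
    using integral_uniform_measure[OF moments(1) pos, of "\<lambda>\<omega>. (sketch_estimate \<omega>)\<^sup>2"] moments(3) pos by simp
  have "N.variance sketch_estimate = integral\<^sup>L (uniform_measure M E) (\<lambda>\<omega>. (sketch_estimate \<omega>)\<^sup>2) - a\<^sup>2"
  proof (subst N.variance_eq_bounded)
    show "sketch_estimate \<in> borel_measurable (uniform_measure M E)"
      by (simp cong: measurable_cong_sets)
    show "AE \<omega> in uniform_measure M E. \<bar>sketch_estimate \<omega>\<bar> \<le> (real d)\<^sup>2"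
      using AE_abs_sketch_estimate_le by (intro AE_uniform_measureI[OF moments(1)]) auto
  qed (simp add: first)
  with first second show "integral\<^sup>L (uniform_measure M E) sketch_estimate = a"
    and "N.variance sketch_estimate = (real k ^ 2 + a ^ 2 - 2 * a) / B"
    by simp_all
qed

end

theorem theorem4:
  fixes M :: "'a measure" and X :: "rtag \<Rightarrow> 'a \<Rightarrow> real"
    and D b k B :: nat and p :: real and u v :: "nat \<Rightarrow> real"
  defines "d \<equiv> 2^b * k"
  defines "hu \<equiv> hashed_gcws D p X u"
  defines "hv \<equiv> hashed_gcws D p X v"
  defines "Z \<equiv> (\<lambda>\<omega>. (\<Sum>m\<in>{1..B}.
              count_sketch d (\<lambda>l. X (H l) \<omega>) (\<lambda>l. X (S l) \<omega>) (onehot_concat b (\<lambda>j. hu j \<omega>)) m *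
              count_sketch d (\<lambda>l. X (H l) \<omega>) (\<lambda>l. X (S l) \<omega>) (onehot_concat b (\<lambda>j. hv j \<omega>)) m))"
  defines "acount \<equiv> (\<lambda>\<omega>. card {j \<in> {1..k}. hu j \<omega> = hv j \<omega>})"
  defines "Pb \<equiv> measure M {\<omega> \<in> space M. hu 1 \<omega> = hv 1 \<omega>}"
  assumes M: "prob_space M"
    and D: "D \<ge> 1" and p: "p > 0" and b: "b \<ge> 1" and k: "k \<ge> 1" and B: "B \<ge> 1"
    and u: "\<exists>i\<in>{1..D}. u i \<noteq> 0" and v: "\<exists>i\<in>{1..D}. v i \<noteq> 0"
    and indep: "prob_space.indep_vars M (\<lambda>_. borel) X (rtags D k d)"
    and distR: "\<And>j i. j \<in> {1..k} \<Longrightarrow> i \<in> {1..2*D} \<Longrightarrow>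
                   distributed M lborel (X (R j i)) (erlang_density 1 1)"
    and distC: "\<And>j i. j \<in> {1..k} \<Longrightarrow> i \<in> {1..2*D} \<Longrightarrow>
                   distributed M lborel (X (C j i)) (erlang_density 1 1)"
    and distB: "\<And>j i. j \<in> {1..k} \<Longrightarrow> i \<in> {1..2*D} \<Longrightarrow>
                   distr M lborel (X (Bt j i)) = uniform_measure lborel {0..1}"
    and distG: "\<And>j i t n. j \<in> {1..k} \<Longrightarrow> i \<in> {1..2*D} \<Longrightarrow> n < 2^b \<Longrightarrow>
                   measure M {\<omega> \<in> space M. X (G j i t) \<omega> = real n} = 1 / 2^b"
    and distH: "\<And>l m. l \<in> {1..d} \<Longrightarrow> m \<in> {1..B} \<Longrightarrow>
                   measure M {\<omega> \<in> space M. X (H l) \<omega> = real m} = 1 / B"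
    and distS: "\<And>l. l \<in> {1..d} \<Longrightarrow>
                   measure M {\<omega> \<in> space M. X (S l) \<omega> = 1} = 1 / 2 \<and>
                   measure M {\<omega> \<in> space M. X (S l) \<omega> = -1} = 1 / 2"
  shows
    "(\<forall>\<alpha> \<beta> :: nat \<Rightarrow> real.
        let E = {\<omega> \<in> space M. \<forall>j\<in>{1..k}. hu j \<omega> = \<alpha> j \<and> hv j \<omega> = \<beta> j};
            a = real (card {j \<in> {1..k}. \<alpha> j = \<beta> j});
            N = uniform_measure M E
        in measure M E > 0 \<longrightarrow>
           (\<integral>\<omega>. Z \<omega> \<partial>N) = a \<and>
           (\<integral>\<omega>. (Z \<omega> - (\<integral>\<omega>'. Z \<omega>' \<partial>N))\<^sup>2 \<partial>N) = (real k ^ 2 + a ^ 2 - 2 * a) / real B)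
     \<and> (\<forall>n. measure M {\<omega> \<in> space M. acount \<omega> = n} = pmf (binomial_pmf k Pb) n)
     \<and> (\<integral>\<omega>. Z \<omega> \<partial>M) = real k * Pb
     \<and> (\<integral>\<omega>. (Z \<omega> - (\<integral>\<omega>'. Z \<omega>' \<partial>M))\<^sup>2 \<partial>M)
          = (real k ^ 2 + real k ^ 2 * Pb ^ 2 - real k * Pb ^ 2 - real k * Pb) / real B
            + real k * Pb * (1 - Pb)
     \<and> (\<integral>\<omega>. Z \<omega> / real k \<partial>M) = Pb
     \<and> (\<integral>\<omega>. (Z \<omega> / real k - (\<integral>\<omega>'. Z \<omega>' / real k \<partial>M))\<^sup>2 \<partial>M)
          = Pb * (1 - Pb) / real k + (1 + Pb ^ 2 - Pb ^ 2 / real k - Pb / real k) / real B"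
proof -
  interpret prob_space M
    by (rule M)
  interpret hashed_gcws_sketch M X D k d B b p u v
    by unfold_locales
      (use indep B distH distS k u v distR distC distB distG sketch_tags_subset_rtags in \<open>simp_all add: d_def\<close>)
  have Z: "Z = sketch_estimate"
    by (simp add: fun_eq_iff Z_def hu_def hv_def sketch_estimate_def sketch_inner_def)
  have acount: "acount = match_count"
    by (simp add: fun_eq_iff acount_def match_count_def hu_def hv_def)
  have Pb: "Pb = match_prob"
    by (simp add: Pb_def match_prob_def hu_def hv_def)
  show ?thesis
    unfolding Z acount Pb Let_def hu_def hv_def
    using conditional_sketch_moments match_count_binomial expectation_sketch_estimate variance_sketch_estimate
      expectation_estimator variance_estimator
    by simp
qed

end
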